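(* Let $p$ be an odd prime. For all $x\in\mathbb C_p$ with $|x|_p>1$: (1) $G_{p,E}(1-x)+G_{p,E}(x)=0$; (2) $G_{p,E}(x)-G_{p,E}(-x)=2x(\log_p(x)-1)$; (3) $G_{p,E}(1+x)+G_{p,E}(x)=2x(\log_p(x)-1)$.
   Context: $|\cdot|_p$ is the absolute value on $\mathbb C_p$ with $|p|_p=p^{-1}$, and $\log_p$ is Iwasawa's $p$-adic logarithm. For $x\in\mathbb C_p$ with $|x|_p>1$, $G_{p,E}(x)=\lim_{N\to\infty}\sum_{a=0}^{p^N-1}\{(x+a)\log_p(x+a)-(x+a)\}(-1)^a$. *)

theory Defs
  imports Complex_Main "HOL-Computational_Algebra.Polynomial"
begin

text \<open>We model C_p axiomatically: a field of characteristic 0 with an absolute value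
  av that is non-archimedean, normalised by av p = 1/p, complete, algebraically closed,
  and in which the algebraic numbers (over Q) are dense.  These properties characterise
  C_p up to isometric isomorphism.\<close>

definition av_conv :: "('a::field \<Rightarrow> real) \<Rightarrow> (nat \<Rightarrow> 'a) \<Rightarrow> 'a \<Rightarrow> bool" where
  "av_conv av s L \<longleftrightarrow> (\<forall>e>0. \<exists>N. \<forall>n\<ge>N. av (s n - L) < e)"

definition av_cauchy :: "('a::field \<Rightarrow> real) \<Rightarrow> (nat \<Rightarrow> 'a) \<Rightarrow> bool" where
  "av_cauchy av s \<longleftrightarrow> (\<forall>e>0. \<exists>N. \<forall>m\<ge>N. \<forall>n\<ge>N. av (s m - s n) < e)"

definition algebraic_over_Q :: "'a::field_char_0 \<Rightarrow> bool" where
  "algebraic_over_Q y \<longleftrightarrow> (\<exists>q :: int poly. q \<noteq> 0 \<and> poly (map_poly of_int q) y = 0)"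

definition is_Cp :: "nat \<Rightarrow> ('a::field_char_0 \<Rightarrow> real) \<Rightarrow> bool" where
  "is_Cp p av \<longleftrightarrow>
     prime p \<and>
     (\<forall>x. av x \<ge> 0) \<and> (\<forall>x. av x = 0 \<longleftrightarrow> x = 0) \<and>
     (\<forall>x y. av (x * y) = av x * av y) \<and>
     (\<forall>x y. av (x + y) \<le> max (av x) (av y)) \<and>
     av (of_nat p) = 1 / real p \<and>
     (\<forall>s. av_cauchy av s \<longrightarrow> (\<exists>L. av_conv av s L)) \<and>
     (\<forall>q :: 'a poly. degree q \<ge> 1 \<longrightarrow> (\<exists>z. poly q z = 0)) \<and>
     (\<forall>x e. e > 0 \<longrightarrow> (\<exists>y. algebraic_over_Q y \<and> av (x - y) < e))"

text \<open>Iwasawa's p-adic logarithm: the unique map that is a homomorphism C_p^* \<rightarrow> (C_p,+),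
  vanishes at p, agrees with the power series of log(1+z) on the open unit disc;
  we set its (irrelevant) value at 0 to be 0.\<close>

definition is_iwasawa_log :: "nat \<Rightarrow> ('a::field_char_0 \<Rightarrow> real) \<Rightarrow> ('a \<Rightarrow> 'a) \<Rightarrow> bool" where
  "is_iwasawa_log p av f \<longleftrightarrow>
     f 0 = 0 \<and>
     (\<forall>x y. x \<noteq> 0 \<longrightarrow> y \<noteq> 0 \<longrightarrow> f (x * y) = f x + f y) \<and>
     f (of_nat p) = 0 \<and>
     (\<forall>z. av z < 1 \<longrightarrow>
        av_conv av (\<lambda>n. \<Sum>k=1..n. (-1) ^ (k + 1) * z ^ k / of_nat k) (f (1 + z)))"

definition log_p :: "nat \<Rightarrow> ('a::field_char_0 \<Rightarrow> real) \<Rightarrow> 'a \<Rightarrow> 'a" where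
  "log_p p av = (THE f. is_iwasawa_log p av f)"

definition av_lim :: "('a::field \<Rightarrow> real) \<Rightarrow> (nat \<Rightarrow> 'a) \<Rightarrow> 'a" where
  "av_lim av s = (THE L. av_conv av s L)"

definition G_pE :: "nat \<Rightarrow> ('a::field_char_0 \<Rightarrow> real) \<Rightarrow> 'a \<Rightarrow> 'a" where
  "G_pE p av x = av_lim av (\<lambda>N. \<Sum>a<p ^ N.
      ((x + of_nat a) * log_p p av (x + of_nat a) - (x + of_nat a)) * (-1) ^ a)"

end

theory Submission
  imports Defs
begin

text \<open>
  Iwasawa's logarithm is constructed inside an arbitrary model of C_p.  On the principal units
  1 + m it is the series of log(1 + z), which is additive because
  log(1 + z) = lim ((1 + z)^(p^n) - 1) / p^n.  Every x \<noteq> 0 has a power x^N lying in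
  p^m (1 + m): for algebraic x the Newton polygon of a relation over Z makes a power of x a unit
  times a power of p, and a pigeonhole argument on the residues of the powers of that unit,
  which are integral combinations of finitely many of them, yields a power in 1 + m; density of
  the algebraic numbers handles the general case.  Then log_p x = log(x^N / p^m) / N.

  With f(y) = y log_p y - y and S_N(x) = \<Sum>a<p^N. (-1)^a f(x + a), the function f is Lipschitz
  on the translates x + a when |x| > 1.  Since p is odd,
  S_(N+1)(x) - S_N(x) = \<Sum>j<p. (-1)^j (S_N(x + j p^N) - S_N(x)) is O(p^-N), so G_(p,E)(x) =
  lim S_N(x) exists.  The identities follow by telescoping: S_N(1 + x) + S_N(x) = f(x) + f(x + p^N),
  and S_N(1 - x) = - S_N(x - p^N) because f is odd.
\<close>

definition log_series :: "'a::field_char_0 \<Rightarrow> nat \<Rightarrow> 'a" where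
  "log_series z n = (\<Sum>k=1..n. (-1) ^ (k + 1) * z ^ k / of_nat k)"

lemma nat_le_power_pred: "(b::nat) \<ge> 2 \<Longrightarrow> k \<ge> 1 \<Longrightarrow> real k \<le> real b ^ (k - 1)"
proof (induction k)
  case (Suc k)
  show ?case
  proof (cases "k = 0")
    case False
    then have "real k \<le> real b ^ (k - 1)" using Suc by simp
    moreover have "real b ^ (k - 1) \<ge> 1" using Suc.prems by simp
    ultimately have "real (Suc k) \<le> 2 * real b ^ (k - 1)" by linarith
    also have "\<dots> \<le> real b * real b ^ (k - 1)" using Suc.prems by (intro mult_right_mono) auto
    also have "\<dots> = real b ^ (Suc k - 1)" using False by (cases k) auto
    finally show ?thesis .
  qed simp
qed simp

lemma LIMSEQ_n_squared_power_zero: "0 \<le> r \<Longrightarrow> r < (1::real) \<Longrightarrow> (\<lambda>n. real n ^ 2 * r ^ n) \<longlonglongrightarrow> 0"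
proof -
  assume r: "0 \<le> r" "r < 1"
  have "norm (sqrt r) < 1" using r by simp
  then have "(\<lambda>n. of_nat n * sqrt r ^ n) \<longlonglongrightarrow> (0::real)" by (rule powser_times_n_limit_0)
  then have "(\<lambda>n. (of_nat n * sqrt r ^ n) ^ 2) \<longlonglongrightarrow> (0::real)" using tendsto_power[of _ 0 _ 2] by fastforce
  moreover have "(of_nat n * sqrt r ^ n) ^ 2 = real n ^ 2 * r ^ n" for n
  proof -
    have "(of_nat n * sqrt r ^ n) ^ 2 = real n ^ 2 * (sqrt r ^ 2) ^ n"
      unfolding power_mult_distrib by (metis power_mult mult.commute)
    then show ?thesis using r by simp
  qed
  ultimately show ?thesis by simp
qed

lemma of_nat_binomial_pred_Suc:
  assumes "j < q"
  shows "(of_nat ((q - 1) choose Suc j) :: 'a::field_char_0)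
    = of_nat ((q - 1) choose j) * (of_nat q / of_nat (Suc j) - 1)"
proof -
  have "Suc j * ((q - 1) choose Suc j) = (q - 1 - j) * ((q - 1) choose j)"
    using binomial_absorption[of j "q - 1"] binomial_absorb_comp[of "q - 1" j] by simp
  then have "of_nat (Suc j) * (of_nat ((q - 1) choose Suc j) :: 'a)
      = of_nat (q - 1 - j) * of_nat ((q - 1) choose j)"
    by (metis of_nat_mult)
  moreover have "(of_nat (q - 1 - j) :: 'a) = of_nat q - of_nat (Suc j)" using assms by (simp add: of_nat_diff)
  ultimately have "of_nat (Suc j) * (of_nat ((q - 1) choose Suc j) :: 'a)
      = (of_nat q - of_nat (Suc j)) * of_nat ((q - 1) choose j)"
    by simp
  then show ?thesis by (simp add: field_simps del: of_nat_Suc)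
qed

lemma power_quotient_minus_log_series:
  fixes z :: "'a::field_char_0"
  assumes "q \<ge> 1"
  shows "((1 + z) ^ q - 1) / of_nat q - log_series z q
    = (\<Sum>k=1..q. (of_nat ((q - 1) choose (k - 1)) - (-1) ^ (k - 1)) * z ^ k / of_nat k)"
proof -
  have "(1 + z) ^ q = (\<Sum>k\<le>q. of_nat (q choose k) * z ^ k)"
    using binomial_ring[of z 1 q] by (simp add: add.commute)
  also have "\<dots> = 1 + (\<Sum>k=1..q. of_nat (q choose k) * z ^ k)"
    by (simp add: atMost_atLeast0 sum.atLeast_Suc_atMost)
  finally have "((1 + z) ^ q - 1) / of_nat q = (\<Sum>k=1..q. of_nat (q choose k) * z ^ k / of_nat q)"
    by (simp add: sum_divide_distrib)
  also have "\<dots> = (\<Sum>k=1..q. of_nat ((q - 1) choose (k - 1)) * z ^ k / of_nat k)"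
  proof (rule sum.cong)
    fix k assume "k \<in> {1..q}"
    then have k: "k > 0" by simp
    have "(of_nat (k * (q choose k)) :: 'a) = of_nat (q * ((q - 1) choose (k - 1)))"
      using times_binomial_minus1_eq[OF k] by metis
    then have "of_nat k * (of_nat (q choose k) :: 'a) = of_nat q * of_nat ((q - 1) choose (k - 1))" by simp
    then show "of_nat (q choose k) * z ^ k / of_nat q = of_nat ((q - 1) choose (k - 1)) * z ^ k / of_nat k"
      using k assms by (simp add: field_simps)
  qed simp
  finally have "((1 + z) ^ q - 1) / of_nat q - log_series z q
      = (\<Sum>k=1..q. of_nat ((q - 1) choose (k - 1)) * z ^ k / of_nat k - (-1) ^ (k + 1) * z ^ k / of_nat k)"
    unfolding log_series_def by (simp only: sum_subtractf)
  also have "\<dots> = (\<Sum>k=1..q. (of_nat ((q - 1) choose (k - 1)) - (-1) ^ (k - 1)) * z ^ k / of_nat k)"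
  proof (rule sum.cong)
    fix k assume "k \<in> {1..q}"
    then have "(-1) ^ (k + 1) = ((-1) ^ (k - 1) :: 'a)" by (cases k) auto
    then show "of_nat ((q - 1) choose (k - 1)) * z ^ k / of_nat k - (-1) ^ (k + 1) * z ^ k / of_nat k
        = (of_nat ((q - 1) choose (k - 1)) - (-1) ^ (k - 1)) * z ^ k / of_nat k"
      by (simp add: algebra_simps diff_divide_distrib)
  qed simp
  finally show ?thesis .
qed

lemma sum_lessThan_mult_split:
  fixes m k :: nat and f :: "nat \<Rightarrow> 'a::comm_monoid_add"
  shows "(\<Sum>a<m * k. f a) = (\<Sum>j<m. \<Sum>b<k. f (j * k + b))"
proof -
  have "(\<Sum>a<m * k. f a) = (\<Sum>j<m. sum f {j * k..<j * k + k})" using sum.nat_group[of f k m] by simp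
  also have "\<dots> = (\<Sum>j<m. \<Sum>b<k. f (j * k + b))"
  proof (rule sum.cong)
    fix j
    show "sum f {j * k..<j * k + k} = (\<Sum>b<k. f (j * k + b))"
      by (subst sum.atLeastLessThan_shift_0) (simp add: atLeast0LessThan comp_def)
  qed simp
  finally show ?thesis .
qed

lemma sum_minus_one_power_odd: "odd m \<Longrightarrow> (\<Sum>j<m. (-1) ^ j :: 'a::comm_ring_1) = 1"
proof -
  have ev: "(\<Sum>j<2 * k. (-1) ^ j :: 'a) = 0" for k
    by (induction k) (simp_all add: algebra_simps)
  assume "odd m"
  then obtain k where "m = Suc (2 * k)" by (metis oddE Suc_eq_plus1)
  then show ?thesis using ev[of k] by simp
qed

lemma subset_arith_progression:
  fixes i0 i1 \<delta> K :: nat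
  assumes i1: "i1 = i0 + K * \<delta>" and "\<delta> > 0"
    and bounds: "\<And>i. i \<in> I \<Longrightarrow> i0 \<le> i \<and> i \<le> i1"
    and dvd: "\<And>i. i \<in> I \<Longrightarrow> i < i1 \<Longrightarrow> \<delta> dvd (i1 - i)"
  shows "I \<subseteq> (\<lambda>j. i0 + j * \<delta>) ` {..K}"
proof
  fix i assume iI: "i \<in> I"
  show "i \<in> (\<lambda>j. i0 + j * \<delta>) ` {..K}"
  proof (cases "i = i1")
    case True then show ?thesis using i1 by auto
  next
    case False
    then have "i < i1" using bounds[OF iI] by simp
    then have "\<delta> dvd (i1 - i)" by (rule dvd[OF iI])
    moreover have "\<delta> dvd (i1 - i0)" using i1 by simp
    ultimately have "\<delta> dvd (i1 - i0) - (i1 - i)" by (rule dvd_diff_nat[rotated])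
    moreover have "(i1 - i0) - (i1 - i) = i - i0" using bounds[OF iI] by simp
    ultimately obtain j where j: "i - i0 = \<delta> * j" by (auto elim: dvdE)
    then have i: "i = i0 + j * \<delta>" using bounds[OF iI] by (metis le_add_diff_inverse mult.commute)
    then have "j * \<delta> \<le> K * \<delta>" using i1 bounds[OF iI] by simp
    then have "j \<le> K" using \<open>\<delta> > 0\<close> by simp
    then show ?thesis using i by auto
  qed
qed

locale Cp =
  fixes p :: nat and av :: "'a::field_char_0 \<Rightarrow> real"
  assumes is_Cp: "is_Cp p av"
begin

lemma prime_p: "prime p" using is_Cp unfolding is_Cp_def by blast
lemma p_gt_1: "p > 1" using prime_p prime_gt_1_nat by blast
lemma av_nonneg: "av x \<ge> 0" using is_Cp unfolding is_Cp_def by blast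
lemma av_eq_0_iff [simp]: "av x = 0 \<longleftrightarrow> x = 0" using is_Cp unfolding is_Cp_def by blast
lemma av_mult: "av (x * y) = av x * av y" using is_Cp unfolding is_Cp_def by blast
lemma av_add_le_max: "av (x + y) \<le> max (av x) (av y)" using is_Cp unfolding is_Cp_def by blast
lemma av_of_nat_p: "av (of_nat p) = 1 / real p" using is_Cp unfolding is_Cp_def by blast
lemma av_cauchy_conv: "av_cauchy av s \<Longrightarrow> \<exists>L. av_conv av s L" using is_Cp unfolding is_Cp_def by blast
lemma algebraic_dense: "e > 0 \<Longrightarrow> \<exists>y. algebraic_over_Q y \<and> av (x - y) < e"
  using is_Cp unfolding is_Cp_def by blast

lemma av_0 [simp]: "av 0 = 0" by simp

lemma av_1 [simp]: "av 1 = 1"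
  using av_mult[of 1 1] by simp

lemma av_minus_1 [simp]: "av (-1) = 1"
proof -
  have "av (-1) * av (-1) = 1" using av_mult[of "-1" "-1"] by simp
  then show ?thesis using av_nonneg[of "-1"]
    by (metis abs_of_nonneg abs_square_eq_1 power2_eq_square)
qed

lemma av_uminus [simp]: "av (- x) = av x"
  using av_mult[of "-1" x] by simp

lemma av_minus_commute: "av (x - y) = av (y - x)"
  by (metis av_uminus minus_diff_eq)

lemma av_pos: "x \<noteq> 0 \<Longrightarrow> av x > 0"
  using av_nonneg[of x] av_eq_0_iff[of x] by linarith

lemma av_inverse: "av (inverse x) = inverse (av x)"
proof (cases "x = 0")
  case False
  then have "av x * av (inverse x) = 1" using av_mult[of x "inverse x"] by simp
  then show ?thesis by (metis inverse_unique)
qed simp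

lemma av_divide: "av (x / y) = av x / av y"
  by (simp add: divide_inverse av_mult av_inverse)

lemma av_power: "av (x ^ n) = av x ^ n"
  by (induction n) (simp_all add: av_mult)

lemma av_diff_le_max: "av (x - y) \<le> max (av x) (av y)"
  using av_add_le_max[of x "-y"] by simp

lemma av_add_less: "av x < e \<Longrightarrow> av y < e \<Longrightarrow> av (x + y) < e"
  using av_add_le_max[of x y] by linarith

lemma av_add_le: "av x \<le> e \<Longrightarrow> av y \<le> e \<Longrightarrow> av (x + y) \<le> e"
  using av_add_le_max[of x y] by linarith

lemma av_add_eq_left: "av y < av x \<Longrightarrow> av (x + y) = av x"
proof -
  assume less: "av y < av x"
  have "av x \<le> max (av (x + y)) (av y)" using av_add_le_max[of "x + y" "- y"] by simp
  then show ?thesis using av_add_le_max[of x y] less by linarith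
qed

lemma av_1_plus: "av x > 1 \<Longrightarrow> av (1 + x) = av x"
  using av_add_eq_left[of 1 x] by (simp add: add.commute)

lemma av_sum_le:
  assumes "finite A" "\<And>i. i \<in> A \<Longrightarrow> av (f i) \<le> B" "B \<ge> 0"
  shows "av (sum f A) \<le> B"
  using assms by (induction A rule: finite_induct) (auto intro: av_add_le)

lemma av_sum_less:
  assumes "finite A" "\<And>i. i \<in> A \<Longrightarrow> av (f i) < B" "B > 0"
  shows "av (sum f A) < B"
  using assms by (induction A rule: finite_induct) (auto intro: av_add_less)

lemma av_of_nat_le_1: "av (of_nat n) \<le> 1"
  by (induction n) (simp_all add: av_add_le)

lemma av_of_int_le_1: "av (of_int n) \<le> 1"
proof (cases "n \<ge> 0")
  case True
  then show ?thesis using av_of_nat_le_1[of "nat n"] by simp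
next
  case False
  then have "of_int n = - (of_nat (nat (-n)) :: 'a)" by simp
  then show ?thesis using av_of_nat_le_1[of "nat (-n)"] by simp
qed

lemma av_of_int_multiple_p: "int p dvd n \<Longrightarrow> av (of_int n) \<le> 1 / real p"
proof -
  assume "int p dvd n"
  then obtain k where "n = int p * k" by auto
  then have "av (of_int n) = av (of_nat p) * av (of_int k)" by (simp add: av_mult)
  also have "\<dots> \<le> 1 / real p" using av_of_nat_p av_of_int_le_1[of k] p_gt_1
    by (simp add: divide_right_mono)
  finally show ?thesis .
qed

lemma av_of_int_coprime_p: "\<not> int p dvd n \<Longrightarrow> av (of_int n) = 1"
proof -
  assume "\<not> int p dvd n"
  then have "coprime (int p) n" using prime_p
    by (simp add: prime_imp_coprime_int prime_nat_iff_prime)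
  then obtain a b where ab: "a * int p + b * n = 1"
    by (metis bezout_int coprime_iff_gcd_eq_1)
  have "av (of_int (a * int p) :: 'a) < 1"
    using av_of_int_multiple_p[of "a * int p"] p_gt_1 by (simp add: le_less_trans)
  moreover have "1 \<le> max (av (of_int (a * int p) :: 'a)) (av (of_int (b * n) :: 'a))"
  proof -
    have "(1 :: 'a) = of_int (a * int p + b * n)" using ab by simp
    then have "(1 :: 'a) = of_int (a * int p) + of_int (b * n)" by (simp only: of_int_add)
    then show ?thesis using av_add_le_max[of "of_int (a * int p) :: 'a" "of_int (b * n)"] by simp
  qed
  ultimately have "1 \<le> av (of_int (b * n) :: 'a)" by (auto simp: le_max_iff_disj)
  also have "\<dots> \<le> av (of_int n)"
    using mult_right_mono[OF av_of_int_le_1 av_nonneg, of b "of_int n"] by (simp add: av_mult)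
  finally show ?thesis using av_of_int_le_1[of n] by simp
qed

lemma av_of_nat_ge: "n \<ge> 1 \<Longrightarrow> av (of_nat n :: 'a) \<ge> 1 / real n"
proof (induction n rule: less_induct)
  case (less n)
  show ?case
  proof (cases "p dvd n")
    case True
    then obtain m where m: "n = p * m" by auto
    then have "m \<ge> 1" using less.prems by (cases m) auto
    have "m < n" using m p_gt_1 \<open>m \<ge> 1\<close> by simp
    then have IH: "av (of_nat m :: 'a) \<ge> 1 / real m" using less.IH \<open>m \<ge> 1\<close> by blast
    have "av (of_nat n :: 'a) = av (of_nat m) / real p" using m av_of_nat_p by (simp add: av_mult)
    also have "\<dots> \<ge> (1 / real m) / real p" using IH p_gt_1 by (intro divide_right_mono) auto
    finally show ?thesis using m by (simp add: mult.commute)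
  next
    case False
    then have "av (of_int (int n) :: 'a) = 1" by (intro av_of_int_coprime_p) simp
    then show ?thesis using less.prems by simp
  qed
qed

lemma av_of_int_eq_power: "n \<noteq> 0 \<Longrightarrow> \<exists>k::nat. av (of_int n :: 'a) = 1 / real p ^ k"
proof (induction "nat \<bar>n\<bar>" arbitrary: n rule: less_induct)
  case less
  show ?case
  proof (cases "int p dvd n")
    case True
    then obtain m where m: "n = int p * m" by auto
    then have "m \<noteq> 0" using less.prems by auto
    then have "nat \<bar>m\<bar> < nat \<bar>n\<bar>" using m p_gt_1 by (simp add: abs_mult nat_mult_distrib)
    then obtain k where "av (of_int m :: 'a) = 1 / real p ^ k" using less.hyps \<open>m \<noteq> 0\<close> by blast
    then have "av (of_int n :: 'a) = 1 / real p ^ Suc k" using m av_of_nat_p by (simp add: av_mult)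
    then show ?thesis by blast
  next
    case False
    then show ?thesis using av_of_int_coprime_p[of n] by (intro exI[of _ 0]) simp
  qed
qed

lemma av_conv_unique: "av_conv av s L \<Longrightarrow> av_conv av s L' \<Longrightarrow> L = L'"
proof (rule ccontr)
  assume c1: "av_conv av s L" and c2: "av_conv av s L'" and ne: "L \<noteq> L'"
  define e where "e = av (L - L')"
  have e: "e > 0" using ne av_pos[of "L - L'"] e_def by simp
  obtain N1 where N1: "\<forall>n\<ge>N1. av (s n - L) < e" using c1 e unfolding av_conv_def by blast
  obtain N2 where N2: "\<forall>n\<ge>N2. av (s n - L') < e" using c2 e unfolding av_conv_def by blast
  define n where "n = max N1 N2"
  have "L - L' = - (s n - L) + (s n - L')" by simp
  then have "e \<le> max (av (s n - L)) (av (s n - L'))" using av_add_le_max e_def by (metis av_uminus)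
  moreover have "av (s n - L) < e" "av (s n - L') < e" using N1 N2 n_def by auto
  ultimately show False by (simp add: max_def split: if_splits)
qed

lemma av_lim_eqI: "av_conv av s L \<Longrightarrow> av_lim av s = L"
  unfolding av_lim_def using av_conv_unique by blast

lemma av_conv_const: "av_conv av (\<lambda>n. c) c"
  unfolding av_conv_def by simp

lemma av_conv_add: "av_conv av s L \<Longrightarrow> av_conv av t M \<Longrightarrow> av_conv av (\<lambda>n. s n + t n) (L + M)"
  unfolding av_conv_def
proof (intro allI impI)
  fix e :: real assume a: "\<forall>e>0. \<exists>N. \<forall>n\<ge>N. av (s n - L) < e" "\<forall>e>0. \<exists>N. \<forall>n\<ge>N. av (t n - M) < e" "e > 0"
  obtain N1 where N1: "\<forall>n\<ge>N1. av (s n - L) < e" using a by blast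
  obtain N2 where N2: "\<forall>n\<ge>N2. av (t n - M) < e" using a by blast
  show "\<exists>N. \<forall>n\<ge>N. av (s n + t n - (L + M)) < e"
  proof (intro exI allI impI)
    fix n assume "n \<ge> max N1 N2"
    then have "av (s n - L) < e" "av (t n - M) < e" using N1 N2 by auto
    then have h: "av ((s n - L) + (t n - M)) < e" using av_add_le_max[of "s n - L" "t n - M"]
      by (simp add: max_def split: if_splits)
    have eq: "s n + t n - (L + M) = (s n - L) + (t n - M)" by simp
    show "av (s n + t n - (L + M)) < e" unfolding eq using h .
  qed
qed

lemma av_conv_zero_iff: "av_conv av s L \<longleftrightarrow> av_conv av (\<lambda>n. s n - L) 0"
  unfolding av_conv_def by simp

lemma av_conv_zero_comparison:
  assumes "\<forall>n\<ge>N. av (d n) \<le> b n" "b \<longlonglongrightarrow> 0"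
  shows "av_conv av d 0"
  unfolding av_conv_def
proof (intro allI impI)
  fix e :: real assume e: "e > 0"
  then obtain N1 where N1: "\<forall>n\<ge>N1. norm (b n - 0) < e" using assms(2) LIMSEQ_iff by blast
  show "\<exists>N. \<forall>n\<ge>N. av (d n - 0) < e"
  proof (intro exI allI impI)
    fix n assume "n \<ge> max N N1"
    then have "av (d n) \<le> b n" "\<bar>b n\<bar> < e" using assms(1) N1 by auto
    then show "av (d n - 0) < e" by simp
  qed
qed

lemma av_conv_bounded: "av_conv av s L \<Longrightarrow> \<exists>N B. B > 0 \<and> (\<forall>n\<ge>N. av (s n) \<le> B)"
proof -
  assume "av_conv av s L"
  then obtain N where N: "\<forall>n\<ge>N. av (s n - L) < 1" unfolding av_conv_def by fastforce
  have "\<forall>n\<ge>N. av (s n) \<le> max (av L) 1"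
  proof (intro allI impI)
    fix n assume "n \<ge> N"
    then have "av (s n - L) < 1" using N by blast
    moreover have "s n = L + (s n - L)" by simp
    ultimately show "av (s n) \<le> max (av L) 1" using av_add_le_max[of L "s n - L"]
      by (smt (verit) max.cobounded1 max.cobounded2)
  qed
  then show ?thesis by (intro exI[of _ N] exI[of _ "max (av L) 1"]) auto
qed

lemma av_conv_mult_zero:
  assumes "av_conv av s L" "av_conv av t 0"
  shows "av_conv av (\<lambda>n. s n * t n) 0"
  unfolding av_conv_def
proof (intro allI impI)
  fix e :: real assume e: "e > 0"
  obtain N B where NB: "B > 0" "\<forall>n\<ge>N. av (s n) \<le> B" using av_conv_bounded[OF assms(1)] by blast
  obtain N1 where N1: "\<forall>n\<ge>N1. av (t n - 0) < e / B" using assms(2) e NB(1) unfolding av_conv_def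
    by (meson divide_pos_pos)
  show "\<exists>N. \<forall>n\<ge>N. av (s n * t n - 0) < e"
  proof (intro exI allI impI)
    fix n assume n: "n \<ge> max N N1"
    then have a: "av (s n) \<le> B" "av (t n) < e / B" using NB N1 by auto
    have "av (s n) * av (t n) \<le> B * av (t n)" using a(1) av_nonneg by (simp add: mult_right_mono)
    also have "\<dots> < B * (e / B)" using a(2) NB(1) by (metis mult_strict_left_mono)
    finally show "av (s n * t n - 0) < e" using NB(1) by (simp add: av_mult)
  qed
qed

lemma av_conv_limit_le:
  assumes "av_conv av s L" "\<forall>n\<ge>N. av (s n) \<le> B"
  shows "av L \<le> B"
proof (rule ccontr)
  assume c: "\<not> av L \<le> B"
  have B0: "B \<ge> 0" using assms(2) av_nonneg order_trans by blast
  then have "av L > 0" using c by simp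
  then obtain N1 where N1: "\<forall>n\<ge>N1. av (s n - L) < av L" using assms(1) unfolding av_conv_def by blast
  define n where "n = max N N1"
  have "av (s n - L) < av L" "av (s n) \<le> B" using N1 assms(2) n_def by auto
  moreover have "L = s n - (s n - L)" by simp
  ultimately have "av L \<le> max (av (s n)) (av (s n - L))" using av_diff_le_max by metis
  then show False using \<open>av (s n - L) < av L\<close> \<open>av (s n) \<le> B\<close> c by (simp add: max_def split: if_splits)
qed

lemma av_conv_if_succ_diff_zero:
  assumes "\<forall>e>0. \<exists>N. \<forall>n\<ge>N. av (s (Suc n) - s n) < e"
  shows "\<exists>L. av_conv av s L"
proof (rule av_cauchy_conv)
  show "av_cauchy av s" unfolding av_cauchy_def
  proof (intro allI impI)
    fix e :: real assume e: "e > 0"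
    then obtain N where N: "\<forall>n\<ge>N. av (s (Suc n) - s n) < e" using assms by blast
    have key: "\<forall>m. av (s (n + m) - s n) < e" if "n \<ge> N" for n
    proof
      fix m show "av (s (n + m) - s n) < e"
      proof (induction m)
        case 0 then show ?case using e by simp
      next
        case (Suc m)
        have "s (n + Suc m) - s n = (s (Suc (n + m)) - s (n + m)) + (s (n + m) - s n)" by simp
        moreover have "av (s (Suc (n + m)) - s (n + m)) < e" using N that by simp
        ultimately show ?case using Suc av_add_le_max[of "s (Suc (n + m)) - s (n + m)" "s (n + m) - s n"]
          by (simp add: max_def split: if_splits)
      qed
    qed
    show "\<exists>N. \<forall>m\<ge>N. \<forall>n\<ge>N. av (s m - s n) < e"
    proof (intro exI allI impI)
      fix m n assume mn: "m \<ge> N" "n \<ge> N"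
      show "av (s m - s n) < e"
      proof (cases "n \<le> m")
        case True
        then show ?thesis using key[OF mn(2), rule_format, of "m - n"] by simp
      next
        case False
        then show ?thesis using key[OF mn(1), rule_format, of "n - m"] av_minus_commute by simp
      qed
    qed
  qed
qed

lemma av_conv_subseq:
  assumes "av_conv av s L" "\<And>n. r n \<ge> n"
  shows "av_conv av (\<lambda>n. s (r n)) L"
  unfolding av_conv_def
proof (intro allI impI)
  fix e :: real assume "e > 0"
  then obtain N where "\<forall>n\<ge>N. av (s n - L) < e" using assms(1) unfolding av_conv_def by blast
  then show "\<exists>N. \<forall>n\<ge>N. av (s (r n) - L) < e" using assms(2) by (meson le_trans)
qed

section \<open>The logarithm series\<close>

definition log1p :: "'a \<Rightarrow> 'a" where "log1p z = av_lim av (log_series z)"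

lemma av_log_series_term_le:
  assumes "av z \<le> r" "k \<ge> 1"
  shows "av ((-1) ^ (k + 1) * z ^ k / of_nat k) \<le> real k * r ^ k"
proof -
  have k: "av (of_nat k :: 'a) \<ge> 1 / real k" using av_of_nat_ge assms(2) by blast
  have kp: "av (of_nat k :: 'a) > 0" using assms(2) av_pos by simp
  have "av ((-1) ^ (k + 1) * z ^ k / of_nat k) = av z ^ k / av (of_nat k :: 'a)"
    by (simp add: av_divide av_mult av_power)
  also have "\<dots> \<le> r ^ k / (1 / real k)"
    using k kp assms av_nonneg[of z] by (intro frac_le power_mono) auto
  also have "\<dots> = real k * r ^ k" by simp
  finally show ?thesis .
qed

lemma log_series_Suc_diff: "log_series z (Suc n) - log_series z n = (-1) ^ (Suc n + 1) * z ^ Suc n / of_nat (Suc n)"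
  unfolding log_series_def by simp

lemma av_conv_log1p: assumes "av z < 1" shows "av_conv av (log_series z) (log1p z)"
proof -
  have "\<exists>L. av_conv av (log_series z) L"
  proof (rule av_conv_if_succ_diff_zero, intro allI impI)
    fix e :: real assume e: "e > 0"
    have "(\<lambda>n. of_nat n * av z ^ n) \<longlonglongrightarrow> (0::real)"
      using assms av_nonneg[of z] by (intro powser_times_n_limit_0) simp
    then have "(\<lambda>n. of_nat (Suc n) * av z ^ (Suc n)) \<longlonglongrightarrow> (0::real)"
      by (rule LIMSEQ_Suc)
    then obtain N where N: "\<forall>n\<ge>N. norm (of_nat (Suc n) * av z ^ (Suc n) - 0) < e"
      using e LIMSEQ_iff by (metis (no_types, lifting))
    show "\<exists>N. \<forall>n\<ge>N. av (log_series z (Suc n) - log_series z n) < e"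
    proof (intro exI allI impI)
      fix n assume "n \<ge> N"
      then have "real (Suc n) * av z ^ Suc n < e" using N av_nonneg[of z] by simp
      then show "av (log_series z (Suc n) - log_series z n) < e" unfolding log_series_Suc_diff
        using av_log_series_term_le[of z "av z" "Suc n"] by simp
    qed
  qed
  then show ?thesis unfolding log1p_def using av_lim_eqI by blast
qed

lemma av_log1p_bounded:
  assumes "r < 1"
  shows "\<exists>B. \<forall>z. av z \<le> r \<longrightarrow> av (log1p z) \<le> B"
proof -
  have r0: "max r 0 < 1" "max r 0 \<ge> 0" using assms by auto
  have "(\<lambda>n. of_nat n * max r 0 ^ n) \<longlonglongrightarrow> (0::real)"
    using r0 by (intro powser_times_n_limit_0) simp
  then have "Bseq (\<lambda>n. of_nat n * max r 0 ^ n)" by (rule convergent_imp_Bseq[OF convergentI])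
  then obtain K where K: "K > 0" "\<forall>n. norm (of_nat n * max r 0 ^ n) \<le> K" by (rule BseqE)
  show ?thesis
  proof (intro exI allI impI)
    fix z assume z: "av z \<le> r"
    then have z1: "av z < 1" using assms by simp
    have "\<forall>n\<ge>0. av (log_series z n) \<le> K"
    proof (intro allI impI)
      fix n :: nat
      show "av (log_series z n) \<le> K" unfolding log_series_def
      proof (rule av_sum_le)
        fix k assume "k \<in> {1..n}"
        then have "av ((-1) ^ (k + 1) * z ^ k / of_nat k) \<le> real k * max r 0 ^ k"
          using z by (intro av_log_series_term_le) auto
        also have "\<dots> \<le> K" using K(2)[rule_format, of k] r0 by simp
        finally show "av ((-1) ^ (k + 1) * z ^ k / of_nat k) \<le> K" .
      qed (use K in auto)
    qed
    then show "av (log1p z) \<le> K" using av_conv_limit_le[OF av_conv_log1p[OF z1]] by blast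
  qed
qed

lemma av_log1p_le:
  assumes "av z \<le> 1 / real p"
  shows "av (log1p z) \<le> av z"
proof -
  have p2: "p \<ge> 2" using p_gt_1 by simp
  have z1: "av z < 1" using assms p_gt_1 by (smt (verit) divide_less_eq_1_pos of_nat_1 of_nat_less_iff)
  have "\<forall>n\<ge>0. av (log_series z n) \<le> av z"
  proof (intro allI impI)
    fix n :: nat
    show "av (log_series z n) \<le> av z" unfolding log_series_def
    proof (rule av_sum_le)
      fix k assume "k \<in> {1..n}"
      then have k1: "k \<ge> 1" by simp
      have "av ((-1) ^ (k + 1) * z ^ k / of_nat k) \<le> real k * av z ^ k"
        using k1 by (intro av_log_series_term_le) auto
      also have "\<dots> = av z * (real k * av z ^ (k - 1))" using k1
        by (cases k) (auto simp: algebra_simps)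
      also have "\<dots> \<le> av z * 1"
      proof (rule mult_left_mono)
        have "real k * av z ^ (k - 1) \<le> real k * (1 / real p) ^ (k - 1)"
          using assms av_nonneg[of z] by (intro mult_left_mono power_mono) auto
        also have "\<dots> = real k / real p ^ (k - 1)" by (simp add: power_divide)
        also have "\<dots> \<le> 1" using nat_le_power_pred[OF p2 k1] p_gt_1 by simp
        finally show "real k * av z ^ (k - 1) \<le> 1" .
      qed (rule av_nonneg)
      finally show "av ((-1) ^ (k + 1) * z ^ k / of_nat k) \<le> av z" by simp
    qed (auto simp: av_nonneg)
  qed
  then show ?thesis using av_conv_limit_le[OF av_conv_log1p[OF z1]] by blast
qed

lemma log1p_0[simp]: "log1p 0 = 0"
proof -
  have "log_series (0::'a) n = 0" for n unfolding log_series_def by (intro sum.neutral) auto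
  then have "av_conv av (log_series 0) 0" unfolding av_conv_def by simp
  then show ?thesis unfolding log1p_def by (rule av_lim_eqI)
qed

lemma av_of_nat_p_power: "av (of_nat (p ^ n) :: 'a) = 1 / real p ^ n"
  by (simp add: av_power av_of_nat_p power_one_over)

lemma le_p_power: "n \<le> p ^ n"
proof -
  have "n < 2 ^ n" by simp
  also have "(2::nat) ^ n \<le> p ^ n" using p_gt_1 by (intro power_mono) auto
  finally show ?thesis by simp
qed

lemma p_power_inverse_le: "N \<ge> 1 \<Longrightarrow> 1 / real p ^ N \<le> 1 / real p"
proof -
  assume "N \<ge> 1"
  then have "real p ^ 1 \<le> real p ^ N" using p_gt_1 by (intro power_increasing) auto
  then show ?thesis using p_gt_1 by (intro divide_left_mono) auto
qed

lemma av_conv_p_power_zero: "av_conv av (\<lambda>n. of_nat (p ^ n) :: 'a) 0"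
proof (rule av_conv_zero_comparison[where N=0])
  show "\<forall>n\<ge>0. av (of_nat (p ^ n) :: 'a) \<le> 1 / real p ^ n" using av_of_nat_p_power by simp
  show "(\<lambda>n. 1 / real p ^ n) \<longlonglongrightarrow> 0" using p_gt_1 by (intro LIMSEQ_divide_realpow_zero) simp
qed

lemma av_p_power_div_of_nat_le:
  assumes "k \<ge> 1"
  shows "av (of_nat (p ^ n) / of_nat k :: 'a) \<le> real k / real p ^ n"
proof -
  have "av (of_nat (p ^ n) / of_nat k :: 'a) = (1 / real p ^ n) / av (of_nat k :: 'a)"
    unfolding av_divide av_of_nat_p_power ..
  also have "\<dots> \<le> (1 / real p ^ n) / (1 / real k)"
    using av_of_nat_ge[OF assms] av_pos[of "of_nat k :: 'a"] assms p_gt_1 by (intro divide_left_mono) auto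
  also have "\<dots> = real k / real p ^ n" by simp
  finally show ?thesis .
qed

lemma av_binomial_p_power_pred_le:
  "j < p ^ n \<Longrightarrow> av (of_nat ((p ^ n - 1) choose j) - (-1) ^ j :: 'a) \<le> real j / real p ^ n"
proof (induction j)
  case 0 then show ?case by simp
next
  case (Suc j)
  define w :: 'a where "w = of_nat (p ^ n) / of_nat (Suc j)"
  define d :: 'a where "d = of_nat ((p ^ n - 1) choose j) - (-1) ^ j"
  have pn: "real p ^ n > 0" using p_gt_1 by simp
  have avw: "av w \<le> real (Suc j) / real p ^ n"
    unfolding w_def by (rule av_p_power_div_of_nat_le) simp
  have "Suc j \<le> p ^ n" using Suc.prems by simp
  then have "real (Suc j) \<le> real p ^ n" by (metis of_nat_le_iff of_nat_power)
  then have "av w \<le> 1" using avw pn by (smt (verit) divide_le_eq_1_pos)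
  then have "av (w - 1) \<le> 1" using av_diff_le_max[of w 1] by simp
  then have "av (d * (w - 1)) \<le> av d" using av_nonneg[of d] by (simp add: av_mult mult_left_le)
  also have "\<dots> \<le> real (Suc j) / real p ^ n" unfolding d_def using Suc pn
    by (smt (verit, best) Suc_lessD divide_right_mono of_nat_Suc)
  finally have "av (d * (w - 1)) \<le> real (Suc j) / real p ^ n" .
  moreover have "av ((-1) ^ j * w) \<le> real (Suc j) / real p ^ n" using avw by (simp add: av_mult av_power)
  moreover have "(of_nat ((p ^ n - 1) choose Suc j) :: 'a) = of_nat ((p ^ n - 1) choose j) * (w - 1)"
    unfolding w_def by (rule of_nat_binomial_pred_Suc[OF Suc_lessD[OF Suc.prems]])
  then have "of_nat ((p ^ n - 1) choose Suc j) - (-1) ^ Suc j = d * (w - 1) + (-1) ^ j * w"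
    unfolding d_def by (simp add: algebra_simps)
  ultimately show ?case by (simp add: av_add_le)
qed

lemma av_power_quotient_minus_log_series_le:
  assumes z: "av z \<le> r" and K: "\<And>k. real k ^ 2 * r ^ k \<le> K" and "K \<ge> 0"
  shows "av (((1 + z) ^ (p ^ n) - 1) / of_nat (p ^ n) - log_series z (p ^ n)) \<le> K / real p ^ n"
proof -
  have pn: "real p ^ n > 0" using p_gt_1 by simp
  have r: "r \<ge> 0" using z av_nonneg order_trans by blast
  have "p ^ n \<ge> 1" using p_gt_1 by simp
  note expansion = power_quotient_minus_log_series[OF this, of z]
  show ?thesis unfolding expansion
  proof (rule av_sum_le)
    fix k assume k: "k \<in> {1..p ^ n}"
    have "av (of_nat ((p ^ n - 1) choose (k - 1)) - (-1) ^ (k - 1) :: 'a) \<le> real (k - 1) / real p ^ n"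
      using k by (intro av_binomial_p_power_pred_le) auto
    also have "\<dots> \<le> real k / real p ^ n" using pn by (intro divide_right_mono) auto
    finally have c: "av (of_nat ((p ^ n - 1) choose (k - 1)) - (-1) ^ (k - 1) :: 'a) \<le> real k / real p ^ n" .
    have "av z ^ k \<le> r ^ k" using z av_nonneg[of z] by (rule power_mono)
    moreover have "0 \<le> real k / real p ^ n" using pn by simp
    ultimately have num: "av (of_nat ((p ^ n - 1) choose (k - 1)) - (-1) ^ (k - 1) :: 'a) * av z ^ k
        \<le> (real k / real p ^ n) * r ^ k"
      by (rule mult_mono[OF c _ _ zero_le_power[OF av_nonneg]])
    have "0 \<le> (real k / real p ^ n) * r ^ k" using pn r by simp
    moreover have "0 < 1 / real k" "1 / real k \<le> av (of_nat k :: 'a)" using av_of_nat_ge k by auto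
    ultimately have "av ((of_nat ((p ^ n - 1) choose (k - 1)) - (-1) ^ (k - 1)) * z ^ k / of_nat k)
        \<le> (real k / real p ^ n) * r ^ k / (1 / real k)"
      unfolding av_divide av_mult av_power by (rule frac_le[OF _ num])
    also have "\<dots> = (real k ^ 2 * r ^ k) / real p ^ n" by (simp add: power2_eq_square)
    also have "\<dots> \<le> K / real p ^ n" using K[of k] pn by (intro divide_right_mono) auto
    finally show "av ((of_nat ((p ^ n - 1) choose (k - 1)) - (-1) ^ (k - 1)) * z ^ k / of_nat k) \<le> K / real p ^ n" .
  qed (use \<open>K \<ge> 0\<close> pn in auto)
qed

lemma av_conv_log1p_p_power:
  assumes z: "av z < 1"
  shows "av_conv av (\<lambda>n. ((1 + z) ^ (p ^ n) - 1) / of_nat (p ^ n)) (log1p z)"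
proof -
  have r: "0 \<le> av z" "av z < 1" using z av_nonneg by auto
  have "(\<lambda>n. real n ^ 2 * av z ^ n) \<longlonglongrightarrow> 0" using r by (rule LIMSEQ_n_squared_power_zero)
  then have "Bseq (\<lambda>n. real n ^ 2 * av z ^ n)" by (rule convergent_imp_Bseq[OF convergentI])
  then obtain K where "K > 0" "\<forall>n. norm (real n ^ 2 * av z ^ n) \<le> K" by (rule BseqE)
  then have K: "K > 0" "\<And>n. real n ^ 2 * av z ^ n \<le> K" by (auto simp: abs_le_iff)
  define D where "D n = ((1 + z) ^ (p ^ n) - 1) / of_nat (p ^ n) - log_series z (p ^ n)" for n
  have "av_conv av D 0"
  proof (rule av_conv_zero_comparison[where N=0])
    show "(\<lambda>n. K / real p ^ n) \<longlonglongrightarrow> 0" using p_gt_1 by (intro LIMSEQ_divide_realpow_zero) simp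
    show "\<forall>n\<ge>0. av (D n) \<le> K / real p ^ n"
      unfolding D_def using K by (intro allI impI av_power_quotient_minus_log_series_le) auto
  qed
  moreover have "av_conv av (\<lambda>n. log_series z (p ^ n)) (log1p z)"
    using av_conv_subseq[OF av_conv_log1p[OF z], of "\<lambda>n. p ^ n"] le_p_power by simp
  ultimately have "av_conv av (\<lambda>n. D n + log_series z (p ^ n)) (0 + log1p z)" by (rule av_conv_add)
  then show ?thesis unfolding D_def by simp
qed

lemma log1p_additive:
  assumes z: "av z < 1" and w: "av w < 1"
  shows "log1p (z + w + z * w) = log1p z + log1p w"
proof -
  have zw: "av (z + w + z * w) < 1"
  proof -
    have "av z * av w \<le> av z * 1" using w av_nonneg[of z] by (intro mult_left_mono) auto
    then have "av (z * w) < 1" using z by (simp add: av_mult)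
    then show ?thesis by (rule av_add_less[OF av_add_less[OF z w]])
  qed
  define a where "a n = ((1 + z) ^ (p ^ n) - 1) / of_nat (p ^ n)" for n
  define b where "b n = ((1 + w) ^ (p ^ n) - 1) / of_nat (p ^ n)" for n
  have A: "av_conv av a (log1p z)" unfolding a_def by (rule av_conv_log1p_p_power[OF z])
  have B: "av_conv av b (log1p w)" unfolding b_def by (rule av_conv_log1p_p_power[OF w])
  have C: "av_conv av (\<lambda>n. ((1 + (z + w + z * w)) ^ (p ^ n) - 1) / of_nat (p ^ n)) (log1p (z + w + z * w))"
    by (rule av_conv_log1p_p_power[OF zw])
  have eq: "((1 + (z + w + z * w)) ^ (p ^ n) - 1) / of_nat (p ^ n) = a n + b n + a n * (b n * of_nat (p ^ n))" for n
  proof -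
    have pn0: "(of_nat (p ^ n) :: 'a) \<noteq> 0" using p_gt_1 by simp
    have "1 + (z + w + z * w) = (1 + z) * (1 + w)" by (simp add: algebra_simps)
    then have "(1 + (z + w + z * w)) ^ (p ^ n) = (1 + z) ^ (p ^ n) * (1 + w) ^ (p ^ n)" by (simp add: power_mult_distrib)
    then show ?thesis unfolding a_def b_def using pn0 by (simp add: field_simps)
  qed
  have N: "av_conv av (\<lambda>n. a n * (b n * of_nat (p ^ n))) 0"
    by (rule av_conv_mult_zero[OF A av_conv_mult_zero[OF B av_conv_p_power_zero]])
  have "av_conv av (\<lambda>n. a n + b n + a n * (b n * of_nat (p ^ n))) (log1p z + log1p w + 0)"
    by (rule av_conv_add[OF av_conv_add[OF A B] N])
  then have "av_conv av (\<lambda>n. ((1 + (z + w + z * w)) ^ (p ^ n) - 1) / of_nat (p ^ n)) (log1p z + log1p w)"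
    unfolding eq by simp
  then show ?thesis using C av_conv_unique by blast
qed

definition principal_unit :: "'a \<Rightarrow> bool" where "principal_unit u \<longleftrightarrow> av (u - 1) < 1"

definition log_principal :: "'a \<Rightarrow> 'a" where "log_principal u = log1p (u - 1)"

lemma av_principal_unit: "principal_unit u \<Longrightarrow> av u = 1"
  unfolding principal_unit_def using av_add_eq_left[of "u - 1" 1] by simp

lemma principal_unit_nonzero: "principal_unit u \<Longrightarrow> u \<noteq> 0"
  using av_principal_unit by fastforce

lemma principal_unit_1[simp]: "principal_unit 1" unfolding principal_unit_def by simp

lemma log_principal_1[simp]: "log_principal 1 = 0" unfolding log_principal_def by simp

lemma principal_unit_mult: "principal_unit u \<Longrightarrow> principal_unit v \<Longrightarrow> principal_unit (u * v)"
proof -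
  assume u: "principal_unit u" and v: "principal_unit v"
  have e: "u * v - 1 = (u - 1) * v + (v - 1)" by (simp add: algebra_simps)
  have h1: "av ((u - 1) * v) < 1" using u v av_principal_unit unfolding principal_unit_def by (simp add: av_mult)
  have h2: "av (v - 1) < 1" using v unfolding principal_unit_def .
  have "av ((u - 1) * v + (v - 1)) < 1" using h1 h2 by (rule av_add_less)
  then show "principal_unit (u * v)" unfolding principal_unit_def e .
qed

lemma log_principal_mult:
  "principal_unit u \<Longrightarrow> principal_unit v \<Longrightarrow> log_principal (u * v) = log_principal u + log_principal v"
proof -
  assume u: "principal_unit u" and v: "principal_unit v"
  have e: "u * v - 1 = (u - 1) + (v - 1) + (u - 1) * (v - 1)" by (simp add: algebra_simps)
  have z: "av (u - 1) < 1" "av (v - 1) < 1" using u v unfolding principal_unit_def by auto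
  show ?thesis unfolding log_principal_def e by (rule log1p_additive[OF z])
qed

lemma principal_unit_power: "principal_unit u \<Longrightarrow> principal_unit (u ^ n)"
  by (induction n) (simp_all add: principal_unit_mult)

lemma log_principal_power: "principal_unit u \<Longrightarrow> log_principal (u ^ n) = of_nat n * log_principal u"
  by (induction n) (simp_all add: log_principal_mult principal_unit_power algebra_simps)

lemma principal_unit_inverse: "principal_unit u \<Longrightarrow> principal_unit (inverse u)"
proof -
  assume u: "principal_unit u"
  then have "u \<noteq> 0" "av u = 1" using principal_unit_nonzero av_principal_unit by auto
  then have "inverse u - 1 = - (u - 1) / u" by (simp add: field_simps)
  then show ?thesis using u \<open>av u = 1\<close> unfolding principal_unit_def by (simp add: av_divide av_minus_commute)
qed

lemma principal_unit_divide: "principal_unit u \<Longrightarrow> principal_unit v \<Longrightarrow> principal_unit (u / v)"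
  by (simp add: divide_inverse principal_unit_mult principal_unit_inverse)

lemma principal_unit_1_plus: "av z < 1 \<Longrightarrow> principal_unit (1 + z)"
  unfolding principal_unit_def by simp

definition ppow :: "int \<Rightarrow> 'a" where "ppow m = of_nat p powi m"

lemma of_nat_p_nonzero: "(of_nat p :: 'a) \<noteq> 0" using p_gt_1 by simp

lemma ppow_nonzero: "ppow m \<noteq> 0" unfolding ppow_def using of_nat_p_nonzero by (simp add: power_int_def)

lemma ppow_add: "ppow (a + b) = ppow a * ppow b" unfolding ppow_def using of_nat_p_nonzero by (simp add: power_int_add)

lemma ppow_0[simp]: "ppow 0 = 1" unfolding ppow_def by simp
lemma ppow_1: "ppow 1 = of_nat p" unfolding ppow_def by simp

lemma ppow_of_nat: "ppow (int k) = of_nat p ^ k" unfolding ppow_def by simp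

lemma power_ppow: "ppow a ^ k = ppow (a * int k)" unfolding ppow_def by (simp add: power_int_power')

lemma ppow_diff: "ppow (a - b) = ppow a / ppow b"
proof -
  have "ppow a = ppow (a - b) * ppow b" using ppow_add[of "a - b" b] by simp
  then show ?thesis using ppow_nonzero[of b] by (simp add: field_simps)
qed

lemma ppow_minus: "ppow (- a) = inverse (ppow a)"
  using ppow_diff[of 0 a] by (simp add: divide_inverse)

lemma av_ppow_of_nat: "av (ppow (int k)) = 1 / real p ^ k"
  unfolding ppow_of_nat by (simp add: av_power av_of_nat_p power_divide)

lemma principal_unit_ppowD: "principal_unit (ppow m) \<Longrightarrow> m = 0"
proof -
  assume "principal_unit (ppow m)"
  then have a: "av (ppow m) = 1" by (rule av_principal_unit)
  have pk: "real p ^ k = 1 \<Longrightarrow> k = 0" for k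
    using one_less_power[of "real p" k] p_gt_1 by (cases "k = 0") auto
  show "m = 0"
  proof (cases "m \<ge> 0")
    case True
    then obtain k where "m = int k" by (metis nonneg_eq_int)
    then have "1 / real p ^ k = 1" using a av_ppow_of_nat by simp
    then have "k = 0" using pk by simp
    then show ?thesis using \<open>m = int k\<close> by simp
  next
    case False
    then obtain k where k: "m = - int k" by (metis nonpos_int_cases linorder_not_le less_imp_le)
    then have "av (inverse (ppow (int k))) = 1" using a ppow_minus by simp
    then have "real p ^ k = 1" using av_ppow_of_nat[of k] by (simp add: av_inverse)
    then have "k = 0" using pk by simp
    then show ?thesis using k by simp
  qed
qed

lemma av_of_int_eq_av_ppow: "c \<noteq> 0 \<Longrightarrow> \<exists>k::nat. av (of_int c :: 'a) = av (ppow (int k))"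
  using av_of_int_eq_power[of c] av_ppow_of_nat by metis

definition residue_eq :: "'a \<Rightarrow> 'a \<Rightarrow> bool" (infix "\<approx>" 50) where
  "u \<approx> v \<longleftrightarrow> av (u - v) < 1"

lemma residue_eq_refl: "u \<approx> u"
  unfolding residue_eq_def by simp

lemma residue_eq_sym: "u \<approx> v \<Longrightarrow> v \<approx> u"
  unfolding residue_eq_def by (simp add: av_minus_commute)

lemma residue_eq_trans: "u \<approx> v \<Longrightarrow> v \<approx> w \<Longrightarrow> u \<approx> w"
  unfolding residue_eq_def using av_add_less[of "u - v" 1 "v - w"] by simp

lemma residue_eq_add: "u \<approx> v \<Longrightarrow> u' \<approx> v' \<Longrightarrow> u + u' \<approx> v + v'"
  unfolding residue_eq_def using av_add_less[of "u - v" 1 "u' - v'"] by (simp add: algebra_simps)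

lemma residue_eq_uminus: "u \<approx> v \<Longrightarrow> - u \<approx> - v"
  unfolding residue_eq_def by (metis av_uminus minus_diff_minus)

lemma residue_eq_mult: "av c \<le> 1 \<Longrightarrow> u \<approx> v \<Longrightarrow> c * u \<approx> c * v"
proof -
  assume c: "av c \<le> 1" and uv: "u \<approx> v"
  have "av (u - v) < 1" using uv unfolding residue_eq_def .
  then have "av c * av (u - v) < 1"
    using c av_nonneg[of c] av_nonneg[of "u - v"] by (metis le_less_trans mult_left_le_one_le)
  then show "c * u \<approx> c * v" unfolding residue_eq_def by (simp add: av_mult right_diff_distrib[symmetric])
qed

lemma residue_eq_sum:
  assumes "finite A" "\<And>j. j \<in> A \<Longrightarrow> f j \<approx> g j"
  shows "sum f A \<approx> sum g A"
  using assms by (induction A rule: finite_induct) (auto intro: residue_eq_add residue_eq_refl)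

lemma int_fraction_residue_eq_int:
  assumes "\<not> int p dvd B"
  shows "\<exists>n::int. of_int A / of_int B \<approx> (of_int n :: 'a)"
proof -
  have "coprime (int p) B" using assms prime_p
    by (simp add: prime_imp_coprime_int prime_nat_iff_prime)
  then obtain u v where uv: "u * int p + v * B = 1" by (metis bezout_int coprime_iff_gcd_eq_1)
  have avB: "av (of_int B :: 'a) = 1" using assms by (rule av_of_int_coprime_p)
  then have B0: "(of_int B :: 'a) \<noteq> 0" by auto
  have "(1 - of_int v * of_int B :: 'a) = of_int (u * int p)" using uv
    by (metis add_diff_cancel_right' of_int_1 of_int_add of_int_mult)
  moreover have "(of_int A / of_int B - of_int (A * v) :: 'a) = of_int A * (1 - of_int v * of_int B) / of_int B"
    using B0 by (simp add: field_simps)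
  ultimately have e: "(of_int A / of_int B - of_int (A * v) :: 'a) = of_int (A * u * int p) / of_int B"
    by simp
  have "av (of_int (A * u * int p) :: 'a) \<le> 1 / real p" by (rule av_of_int_multiple_p) simp
  also have "\<dots> < 1" using p_gt_1 by simp
  finally have "av (of_int A / of_int B - of_int (A * v) :: 'a) < 1" unfolding e by (simp add: av_divide avB)
  then show ?thesis unfolding residue_eq_def by blast
qed

lemma int_fraction_residue_eq_int_if_integral:
  "B \<noteq> 0 \<Longrightarrow> av (of_int A / of_int B :: 'a) \<le> 1 \<Longrightarrow> \<exists>n::int. of_int A / of_int B \<approx> (of_int n :: 'a)"
proof (induction "nat \<bar>B\<bar>" arbitrary: A B rule: less_induct)
  case less
  show ?case
  proof (cases "int p dvd B")
    case B: True
    then obtain B' where B': "B = int p * B'" by auto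
    then have B'0: "B' \<noteq> 0" using less.prems by auto
    show ?thesis
    proof (cases "int p dvd A")
      case True
      then obtain A' where A': "A = int p * A'" by auto
      have eq: "(of_int A / of_int B :: 'a) = of_int A' / of_int B'" using A' B' of_nat_p_nonzero by simp
      have "nat \<bar>B'\<bar> < nat \<bar>B\<bar>" using B' B'0 p_gt_1 by (simp add: abs_mult nat_mult_distrib)
      then show ?thesis using less.hyps[of B' A'] B'0 less.prems(2) unfolding eq by blast
    next
      case False
      then have "av (of_int A :: 'a) = 1" by (rule av_of_int_coprime_p)
      moreover have "av (of_int B :: 'a) \<le> 1 / real p" using B by (rule av_of_int_multiple_p)
      moreover have "av (of_int B :: 'a) > 0" using less.prems av_pos by simp
      moreover have "real p * av (of_int B :: 'a) \<le> real p * (1 / real p)"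
        using calculation(2) by (intro mult_left_mono) auto
      ultimately have "av (of_int A / of_int B :: 'a) \<ge> real p" using p_gt_1 by (simp add: av_divide field_simps)
      then show ?thesis using less.prems(2) p_gt_1 by simp
    qed
  next
    case False
    then show ?thesis by (rule int_fraction_residue_eq_int)
  qed
qed

lemma ppow_fraction_residue_eq_int:
  assumes "b \<noteq> 0" "av (of_int a * ppow m / of_int b) \<le> 1"
  shows "\<exists>n::int. of_int a * ppow m / of_int b \<approx> of_int n"
proof (cases "m \<ge> 0")
  case True
  then obtain k where k: "m = int k" by (metis nonneg_eq_int)
  have e: "(of_int a * ppow m / of_int b :: 'a) = of_int (a * int p ^ k) / of_int b" using k ppow_of_nat by simp
  show ?thesis using int_fraction_residue_eq_int_if_integral[of b "a * int p ^ k"] assms unfolding e by simp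
next
  case False
  then obtain k where k: "m = - int k" by (metis nonpos_int_cases linorder_not_le less_imp_le)
  have e: "(of_int a * ppow m / of_int b :: 'a) = of_int a / of_int (b * int p ^ k)"
    using k ppow_minus ppow_of_nat of_nat_p_nonzero by (simp add: field_simps)
  moreover have "b * int p ^ k \<noteq> 0" using assms(1) p_gt_1 by simp
  ultimately show ?thesis using int_fraction_residue_eq_int_if_integral[of "b * int p ^ k" a] assms
    unfolding e by simp
qed

lemma int_combination_times_root:
  assumes K: "K = Suc K'" and rel: "s ^ K \<approx> - (\<Sum>j<K. of_int (n j) * s ^ j)"
  shows "s * (\<Sum>j<K. of_int (g j) * s ^ j)
    \<approx> (\<Sum>j<K. of_int ((if j = 0 then 0 else g (j - 1)) - g K' * n j) * s ^ j)"
proof -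
  let ?shifted = "\<Sum>j<K'. of_int (g j) * s ^ Suc j"
  let ?rel = "\<Sum>j<K. of_int (n j) * s ^ j"
  have e1: "s * (\<Sum>j<K. of_int (g j) * s ^ j) = ?shifted + of_int (g K') * s ^ K"
    unfolding K by (simp add: sum_distrib_left algebra_simps)
  have e2: "(\<Sum>j<K. of_int (if j = 0 then 0 else g (j - 1)) * s ^ j) = ?shifted"
    unfolding K by (subst sum.lessThan_Suc_shift) simp
  have e3: "(\<Sum>j<K. of_int ((if j = 0 then 0 else g (j - 1)) - g K' * n j) * s ^ j)
      = ?shifted + - (of_int (g K') * ?rel)"
    using e2 by (simp add: algebra_simps sum_subtractf sum_distrib_left)
  have "of_int (g K') * s ^ K \<approx> of_int (g K') * (- ?rel)"
    by (rule residue_eq_mult[OF av_of_int_le_1 rel])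
  then have "?shifted + of_int (g K') * s ^ K \<approx> ?shifted + - (of_int (g K') * ?rel)"
    by (intro residue_eq_add[OF residue_eq_refl]) simp
  then show ?thesis unfolding e1 e3 .
qed

lemma unit_power_residue_eq_int_combination:
  assumes s: "av s = 1" and K: "K \<ge> 1" and rel: "s ^ K \<approx> - (\<Sum>j<K. of_int (n j) * s ^ j)"
  shows "\<exists>g::nat \<Rightarrow> int. s ^ m \<approx> (\<Sum>j<K. of_int (g j) * s ^ j)"
proof (induction m)
  case 0
  obtain K' where K': "K = Suc K'" using K by (cases K) auto
  have "(\<Sum>j<K. of_int (if j = 0 then 1 else 0) * s ^ j) = 1"
    unfolding K' by (subst sum.lessThan_Suc_shift) simp
  then show ?case by (intro exI[of _ "\<lambda>j. if j = 0 then 1 else 0"]) (simp add: residue_eq_refl)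
next
  case (Suc m)
  obtain K' where K': "K = Suc K'" using K by (cases K) auto
  obtain g where g: "s ^ m \<approx> (\<Sum>j<K. of_int (g j) * s ^ j)" using Suc.IH by blast
  have "s ^ Suc m \<approx> s * (\<Sum>j<K. of_int (g j) * s ^ j)"
    using residue_eq_mult[OF _ g, of s] s by simp
  then have "s ^ Suc m \<approx> (\<Sum>j<K. of_int ((if j = 0 then 0 else g (j - 1)) - g K' * n j) * s ^ j)"
    by (rule residue_eq_trans[OF _ int_combination_times_root[OF K' rel]])
  then show ?case by (rule exI[of _ "\<lambda>j. (if j = 0 then 0 else g (j - 1)) - g K' * n j"])
qed

lemma int_combination_residue_eq_digits:
  assumes s: "av s = 1"
  shows "\<exists>l \<in> {l. set l \<subseteq> {0..<int p} \<and> length l = K}.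
    (\<Sum>j<K. of_int (g j) * s ^ j) \<approx> (\<Sum>j<K. of_int (l ! j) * s ^ j)"
proof
  define l where "l = map (\<lambda>j. g j mod int p) [0..<K]"
  show "l \<in> {l. set l \<subseteq> {0..<int p} \<and> length l = K}" unfolding l_def using p_gt_1 by auto
  show "(\<Sum>j<K. of_int (g j) * s ^ j) \<approx> (\<Sum>j<K. of_int (l ! j) * s ^ j)"
  proof (rule residue_eq_sum)
    fix j assume "j \<in> {..<K}"
    then have lj: "l ! j = g j mod int p" unfolding l_def by simp
    have "int p dvd (g j - g j mod int p)" by (simp add: mod_eq_dvd_iff)
    then have "av (of_int (g j - g j mod int p) :: 'a) \<le> 1 / real p" by (rule av_of_int_multiple_p)
    also have "\<dots> < 1" using p_gt_1 by simp
    finally have "of_int (g j) \<approx> (of_int (l ! j) :: 'a)" unfolding residue_eq_def lj by simp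
    then have "s ^ j * of_int (g j) \<approx> s ^ j * of_int (l ! j)"
      using s by (intro residue_eq_mult) (simp_all add: av_power)
    then show "of_int (g j) * s ^ j \<approx> of_int (l ! j) * s ^ j" by (simp add: mult.commute)
  qed simp
qed

lemma principal_unit_power_diff:
  assumes s: "av s = 1" and "a < b" "s ^ a \<approx> s ^ b"
  shows "principal_unit (s ^ (b - a))"
proof -
  have "s ^ b = s ^ a * s ^ (b - a)" using assms(2) by (simp add: power_add[symmetric])
  then have "s ^ a - s ^ b = - (s ^ a * (s ^ (b - a) - 1))" by (simp add: algebra_simps)
  then have "av (s ^ (b - a) - 1) = av (s ^ a - s ^ b)" using s by (simp add: av_mult av_power)
  then show ?thesis using assms(3) unfolding principal_unit_def residue_eq_def by simp
qed

text \<open>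
  All powers of s are congruent to one of the finitely many combinations with digit
  coefficients, so two of them are congruent.
\<close>
lemma unit_power_principal_unit:
  assumes s: "av s = 1" and K: "K \<ge> 1" and rel: "s ^ K \<approx> - (\<Sum>j<K. of_int (n j) * s ^ j)"
  shows "\<exists>M\<ge>1. principal_unit (s ^ M)"
proof -
  define F where "F = (\<lambda>l. \<Sum>j<K. of_int (l ! j) * s ^ j) ` {l. set l \<subseteq> {0..<int p} \<and> length l = K}"
  have "finite F" unfolding F_def by (intro finite_imageI finite_lists_length_eq) simp
  have "\<exists>v\<in>F. s ^ m \<approx> v" for m
  proof -
    obtain g where g: "s ^ m \<approx> (\<Sum>j<K. of_int (g j) * s ^ j)"
      using unit_power_residue_eq_int_combination[OF assms] by blast
    obtain l where l: "l \<in> {l. set l \<subseteq> {0..<int p} \<and> length l = K}"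
      "(\<Sum>j<K. of_int (g j) * s ^ j) \<approx> (\<Sum>j<K. of_int (l ! j) * s ^ j)"
      using int_combination_residue_eq_digits[OF s] by blast
    have "(\<Sum>j<K. of_int (l ! j) * s ^ j) \<in> F" unfolding F_def using l(1) by (rule imageI)
    moreover have "s ^ m \<approx> (\<Sum>j<K. of_int (l ! j) * s ^ j)" by (rule residue_eq_trans[OF g l(2)])
    ultimately show ?thesis by blast
  qed
  then obtain \<phi> where \<phi>: "\<And>m. \<phi> m \<in> F \<and> s ^ m \<approx> \<phi> m" by metis
  have "\<not> inj \<phi>"
  proof
    assume "inj \<phi>"
    moreover have "finite (range \<phi>)" using \<open>finite F\<close> \<phi> by (meson finite_subset image_subsetI)
    ultimately show False using finite_imageD by blast
  qed
  then obtain a b where ab: "a \<noteq> b" "\<phi> a = \<phi> b" unfolding inj_def by blast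
  then have ab_eq: "s ^ a \<approx> s ^ b" using \<phi>[of a] \<phi>[of b] residue_eq_trans residue_eq_sym by metis
  show ?thesis
  proof (cases "a < b")
    case True
    then show ?thesis using principal_unit_power_diff[OF s True ab_eq] by (intro exI[of _ "b - a"]) simp
  next
    case False
    then have "b < a" using ab(1) by simp
    then show ?thesis using principal_unit_power_diff[OF s \<open>b < a\<close> residue_eq_sym[OF ab_eq]]
      by (intro exI[of _ "a - b"]) simp
  qed
qed

section \<open>Powers of algebraic numbers\<close>

lemma monic_relation_of_dominant_coefficients:
  assumes s: "av s = 1" and aK: "a K \<noteq> 0"
    and a_le: "\<And>j. j \<le> K \<Longrightarrow> av (a j) \<le> av (a K)"
    and a_frac: "\<And>j. j \<le> K \<Longrightarrow> \<exists>u v m. v \<noteq> 0 \<and> a j / a K = of_int u * ppow m / of_int v"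
    and small: "av (\<Sum>j\<le>K. a j * s ^ j) < av (a K)"
  shows "\<exists>n. s ^ K \<approx> - (\<Sum>j<K. of_int (n j) * s ^ j)"
proof -
  define \<rho> where "\<rho> j = a j / a K" for j
  have avK: "av (a K) > 0" using aK by (rule av_pos)
  have "\<exists>n::int. \<rho> j \<approx> of_int n" if "j < K" for j
  proof -
    have "\<exists>u v m. v \<noteq> 0 \<and> \<rho> j = of_int u * ppow m / of_int v"
      unfolding \<rho>_def using a_frac[of j] \<open>j < K\<close> by simp
    then obtain u v m where uvm: "v \<noteq> 0" "\<rho> j = of_int u * ppow m / of_int v" by blast
    have "av (\<rho> j) \<le> 1" unfolding \<rho>_def using a_le[of j] \<open>j < K\<close> avK by (simp add: av_divide)
    then show ?thesis unfolding uvm(2) by (rule ppow_fraction_residue_eq_int[OF uvm(1)])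
  qed
  then obtain n where n: "\<And>j. j < K \<Longrightarrow> \<rho> j \<approx> of_int (n j)" by metis
  have "(\<Sum>j<K. \<rho> j * s ^ j) \<approx> (\<Sum>j<K. of_int (n j) * s ^ j)"
  proof (rule residue_eq_sum)
    fix j assume "j \<in> {..<K}"
    then have "s ^ j * \<rho> j \<approx> s ^ j * of_int (n j)"
      using n s by (intro residue_eq_mult) (auto simp: av_power)
    then show "\<rho> j * s ^ j \<approx> of_int (n j) * s ^ j" by (simp add: mult.commute)
  qed simp
  moreover have "(\<Sum>j\<le>K. \<rho> j * s ^ j) = (\<Sum>j\<le>K. a j * s ^ j) / a K"
    unfolding \<rho>_def by (simp add: sum_divide_distrib)
  then have "(\<Sum>j\<le>K. \<rho> j * s ^ j) \<approx> 0"
    unfolding residue_eq_def using small avK by (simp add: av_divide)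
  ultimately have "(\<Sum>j\<le>K. \<rho> j * s ^ j) + - (\<Sum>j<K. \<rho> j * s ^ j)
      \<approx> 0 + - (\<Sum>j<K. of_int (n j) * s ^ j)"
    by (intro residue_eq_add residue_eq_uminus)
  moreover have "(\<Sum>j\<le>K. \<rho> j * s ^ j) = s ^ K + (\<Sum>j<K. \<rho> j * s ^ j)"
    using aK by (simp add: \<rho>_def lessThan_Suc_atMost[symmetric])
  ultimately have "s ^ K \<approx> - (\<Sum>j<K. of_int (n j) * s ^ j)" by simp
  then show ?thesis by blast
qed

lemma vanishing_sum_dominant_terms:
  fixes T :: "nat \<Rightarrow> 'a"
  assumes sum0: "(\<Sum>i\<le>D. T i) = 0" and TD: "T D \<noteq> 0"
  obtains i0 i1 where "i0 < i1" "i1 \<le> D" "av (T i0) = av (T i1)" "av (T i1) > 0"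
    and "\<And>i. i \<le> D \<Longrightarrow> av (T i) \<le> av (T i1)"
    and "\<And>i. i \<le> D \<Longrightarrow> av (T i) = av (T i1) \<Longrightarrow> i0 \<le> i \<and> i \<le> i1"
    and "\<And>G. G \<subseteq> {..D} \<Longrightarrow> {i. i \<le> D \<and> av (T i) = av (T i1)} \<subseteq> G \<Longrightarrow> av (sum T G) < av (T i1)"
proof -
  define \<mu> where "\<mu> = Max ((\<lambda>i. av (T i)) ` {..D})"
  have \<mu>_ge: "av (T i) \<le> \<mu>" if "i \<le> D" for i unfolding \<mu>_def using that by (intro Max_ge) auto
  have \<mu>_pos: "\<mu> > 0" using av_pos[OF TD] \<mu>_ge[of D] by simp
  define I where "I = {i. i \<le> D \<and> av (T i) = \<mu>}"
  have "finite I" unfolding I_def by simp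
  have "I \<noteq> {}"
  proof -
    have "\<mu> \<in> (\<lambda>i. av (T i)) ` {..D}" unfolding \<mu>_def by (intro Max_in) auto
    then show ?thesis unfolding I_def by auto
  qed
  define i0 where "i0 = Min I"
  define i1 where "i1 = Max I"
  have i0I: "i0 \<in> I" and i1I: "i1 \<in> I"
    unfolding i0_def i1_def using \<open>finite I\<close> \<open>I \<noteq> {}\<close> by simp_all
  have I_bounds: "i0 \<le> i \<and> i \<le> i1" if "i \<in> I" for i
    unfolding i0_def i1_def using \<open>finite I\<close> that by simp
  have \<mu>_eq: "av (T i1) = \<mu>" and "i1 \<le> D" using i1I unfolding I_def by simp_all
  have dominant: "av (sum T G) < \<mu>" if G: "G \<subseteq> {..D}" "I \<subseteq> G" for G
  proof -
    have "sum T {..D} = sum T ({..D} - G) + sum T G" using G(1) by (intro sum.subset_diff) auto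
    then have "sum T G = - sum T ({..D} - G)" using sum0 by (simp add: eq_neg_iff_add_eq_0 add.commute)
    moreover have "av (T i) < \<mu>" if "i \<in> {..D} - G" for i
      using that G(2) \<mu>_ge[of i] unfolding I_def by fastforce
    then have "av (sum T ({..D} - G)) < \<mu>" using \<mu>_pos by (intro av_sum_less) auto
    ultimately show ?thesis by simp
  qed
  have "i0 < i1"
  proof (rule ccontr)
    assume "\<not> i0 < i1"
    then have "I = {i1}" using I_bounds i1I by fastforce
    then show False using dominant[of I] \<mu>_eq \<open>i1 \<le> D\<close> by simp
  qed
  show ?thesis
  proof (rule that[OF \<open>i0 < i1\<close> \<open>i1 \<le> D\<close>])
    show "av (T i0) = av (T i1)" using i0I \<mu>_eq unfolding I_def by simp
    show "av (T i1) > 0" using \<mu>_eq \<mu>_pos by simp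
    show "av (T i) \<le> av (T i1)" if "i \<le> D" for i using \<mu>_ge[OF that] \<mu>_eq by simp
    show "i0 \<le> i \<and> i \<le> i1" if "i \<le> D" "av (T i) = av (T i1)" for i
      using I_bounds that \<mu>_eq unfolding I_def by simp
    show "av (sum T G) < av (T i1)" if "G \<subseteq> {..D}" "{i. i \<le> D \<and> av (T i) = av (T i1)} \<subseteq> G" for G
      using dominant[OF that(1)] that(2) \<mu>_eq unfolding I_def by simp
  qed
qed

text \<open>
  The order of av y modulo the values of the powers of p.  LEAST is only ever taken when a
  positive t with av (y ^ t) = av (ppow e) is known to exist.
\<close>
definition abs_order :: "'a \<Rightarrow> nat" where
  "abs_order y = (LEAST t. t > 0 \<and> (\<exists>e. av (y ^ t) = av (ppow e)))"

lemma abs_order_spec: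
  assumes "t > 0" "av (y ^ t) = av (ppow e)"
  shows "abs_order y > 0" "\<exists>e. av (y ^ abs_order y) = av (ppow e)"
  using LeastI[of "\<lambda>t. t > 0 \<and> (\<exists>e. av (y ^ t) = av (ppow e))" t] assms
  unfolding abs_order_def by blast+

lemma abs_order_dvd:
  assumes t: "t > 0" "av (y ^ t) = av (ppow et)"
  shows "abs_order y dvd t"
proof (rule ccontr)
  define \<delta> where "\<delta> = abs_order y"
  obtain e where e: "av (y ^ \<delta>) = av (ppow e)" using abs_order_spec[OF t] unfolding \<delta>_def by blast
  have "\<delta> > 0" using abs_order_spec[OF t] unfolding \<delta>_def by blast
  assume "\<not> abs_order y dvd t"
  define r where "r = t mod \<delta>"
  have "r > 0" using \<open>\<not> abs_order y dvd t\<close> unfolding r_def \<delta>_def by (metis dvd_eq_mod_eq_0 gr0I)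
  have "r < \<delta>" unfolding r_def using \<open>\<delta> > 0\<close> by simp
  have t_split: "t = \<delta> * (t div \<delta>) + r" unfolding r_def by simp
  have "av (y ^ t) = av (y ^ \<delta>) ^ (t div \<delta>) * av (y ^ r)"
    by (subst t_split) (simp add: av_mult av_power power_add power_mult)
  also have "av (y ^ \<delta>) ^ (t div \<delta>) = av (ppow (e * int (t div \<delta>)))"
    unfolding e by (metis power_ppow av_power)
  finally have "av (ppow et) = av (ppow (e * int (t div \<delta>))) * av (y ^ r)" using t(2) by simp
  moreover have "av (ppow (e * int (t div \<delta>))) \<noteq> 0" using ppow_nonzero by simp
  ultimately have "av (y ^ r) = av (ppow et) / av (ppow (e * int (t div \<delta>)))"
    by (simp add: eq_divide_eq mult.commute)
  then have "av (y ^ r) = av (ppow (et - e * int (t div \<delta>)))" by (simp add: ppow_diff av_divide)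
  then have "\<delta> \<le> r" unfolding \<delta>_def abs_order_def by (intro Least_le) (use \<open>r > 0\<close> in blast)
  then show False using \<open>r < \<delta>\<close> by simp
qed

lemma algebraic_vanishing_sum:
  fixes y :: 'a
  assumes "algebraic_over_Q y" "y \<noteq> 0"
  obtains c :: "nat \<Rightarrow> int" and D where "(\<Sum>i\<le>D. of_int (c i) * y ^ i) = 0" "c D \<noteq> 0"
proof -
  obtain q :: "int poly" where q: "q \<noteq> 0" "poly (map_poly of_int q) y = 0"
    using assms(1) unfolding algebraic_over_Q_def by blast
  have deg: "degree (map_poly (of_int :: int \<Rightarrow> 'a) q) = degree q" by (rule degree_map_poly) simp
  have cf: "coeff (map_poly (of_int :: int \<Rightarrow> 'a) q) i = of_int (coeff q i)" for i
    by (rule coeff_map_poly) simp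
  have "(\<Sum>i\<le>degree q. of_int (coeff q i) * y ^ i) = 0"
    using q(2) by (simp add: poly_altdef deg cf)
  moreover have "coeff q (degree q) \<noteq> 0" using q(1) by simp
  ultimately show ?thesis by (rule that)
qed

lemma equal_terms_power_value:
  assumes "y \<noteq> 0" "a \<noteq> 0" "b \<noteq> 0" "i \<le> j" "av (of_int a * y ^ i) = av (of_int b * y ^ j)"
  shows "\<exists>e. av (y ^ (j - i)) = av (ppow e)"
proof -
  obtain ka kb where k: "av (of_int a :: 'a) = av (ppow (int ka))" "av (of_int b :: 'a) = av (ppow (int kb))"
    using av_of_int_eq_av_ppow assms(2,3) by metis
  have "av (of_int a :: 'a) * av y ^ i = av (of_int b :: 'a) * (av y ^ i * av y ^ (j - i))"
    using assms(4,5) by (simp add: av_mult av_power power_add[symmetric])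
  then have "av y ^ (j - i) = av (of_int a :: 'a) / av (of_int b :: 'a)"
    using assms av_pos[of y] av_pos[of "of_int b :: 'a"] by (simp add: field_simps)
  then have "av (y ^ (j - i)) = av (ppow (int ka - int kb))" using k by (simp add: av_power ppow_diff av_divide)
  then show ?thesis by blast
qed

text \<open>
  Newton polygon: the dominant terms c_i y^i of a relation of y over Z have indices in an
  arithmetic progression i0 + j \<delta>, where \<delta> is the order of av y, and the terms outside
  the progression are strictly smaller.
\<close>
lemma dominant_terms_progression:
  fixes c :: "nat \<Rightarrow> int" and y :: 'a
  assumes y0: "y \<noteq> 0" and "(\<Sum>i\<le>D. of_int (c i) * y ^ i) = 0" and cD: "c D \<noteq> 0"
  obtains \<delta> K e i0 where "\<delta> > 0" "K \<ge> 1" "av (y ^ \<delta>) = av (ppow e)" "c (i0 + K * \<delta>) \<noteq> 0"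
    "\<And>j. j \<le> K \<Longrightarrow> av (of_int (c (i0 + j * \<delta>)) * y ^ (i0 + j * \<delta>))
      \<le> av (of_int (c (i0 + K * \<delta>)) * y ^ (i0 + K * \<delta>))"
    "av (\<Sum>j\<le>K. of_int (c (i0 + j * \<delta>)) * y ^ (i0 + j * \<delta>))
      < av (of_int (c (i0 + K * \<delta>)) * y ^ (i0 + K * \<delta>))"
proof -
  define T where "T i = of_int (c i) * y ^ i" for i
  have sum0: "(\<Sum>i\<le>D. T i) = 0" unfolding T_def by fact
  have TD: "T D \<noteq> 0" using cD y0 unfolding T_def by simp
  obtain i0 i1 where i01: "i0 < i1" "i1 \<le> D" "av (T i0) = av (T i1)" "av (T i1) > 0"
    and T_le: "\<And>i. i \<le> D \<Longrightarrow> av (T i) \<le> av (T i1)"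
    and I_bounds: "\<And>i. i \<le> D \<Longrightarrow> av (T i) = av (T i1) \<Longrightarrow> i0 \<le> i \<and> i \<le> i1"
    and dominant: "\<And>G. G \<subseteq> {..D} \<Longrightarrow> {i. i \<le> D \<and> av (T i) = av (T i1)} \<subseteq> G \<Longrightarrow>
      av (sum T G) < av (T i1)"
    by (rule vanishing_sum_dominant_terms[OF sum0 TD]) blast
  have c_nonzero: "c i \<noteq> 0" if "av (T i) = av (T i1)" for i
    using that i01(4) y0 unfolding T_def by auto
  have gap: "\<exists>e. av (y ^ (i1 - i)) = av (ppow e)" if "av (T i) = av (T i1)" "i \<le> i1" for i
    using that c_nonzero[OF that(1)] c_nonzero[of i1] y0 unfolding T_def
    by (intro equal_terms_power_value) auto
  define \<delta> where "\<delta> = abs_order y"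
  have gap_dvd: "\<delta> dvd (i1 - i)" if "av (T i) = av (T i1)" "i < i1" for i
    using gap[OF that(1)] that(2) unfolding \<delta>_def by (auto intro: abs_order_dvd)
  obtain e where e: "av (y ^ \<delta>) = av (ppow e)" and "\<delta> > 0"
    using gap[OF i01(3)] i01(1) abs_order_spec[of "i1 - i0" y] unfolding \<delta>_def by auto
  define K where "K = (i1 - i0) div \<delta>"
  have i1K: "i1 = i0 + K * \<delta>" unfolding K_def using gap_dvd[OF i01(3)] i01(1) by auto
  have inj: "inj_on (\<lambda>j. i0 + j * \<delta>) {..K}" using \<open>\<delta> > 0\<close> by (intro inj_onI) simp
  have prog_I: "{i. i \<le> D \<and> av (T i) = av (T i1)} \<subseteq> (\<lambda>j. i0 + j * \<delta>) ` {..K}"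
    using I_bounds gap_dvd \<open>\<delta> > 0\<close> i1K by (intro subset_arith_progression) auto
  have prog_le: "i0 + j * \<delta> \<le> D" if "j \<le> K" for j
    using that i1K i01(2) mult_le_mono1[of j K \<delta>] by linarith
  then have prog_D: "(\<lambda>j. i0 + j * \<delta>) ` {..K} \<subseteq> {..D}" by auto
  have "sum T ((\<lambda>j. i0 + j * \<delta>) ` {..K}) = (\<Sum>j\<le>K. T (i0 + j * \<delta>))"
    by (rule sum.reindex[OF inj, unfolded comp_def])
  then have "av (\<Sum>j\<le>K. T (i0 + j * \<delta>)) < av (T i1)" using dominant[OF prog_D prog_I] by simp
  then have T_sum: "av (\<Sum>j\<le>K. T (i0 + j * \<delta>)) < av (T (i0 + K * \<delta>))" unfolding i1K .
  have T_le': "av (T (i0 + j * \<delta>)) \<le> av (T (i0 + K * \<delta>))" if "j \<le> K" for j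
    using T_le[OF prog_le[OF that]] unfolding i1K .
  have "K \<ge> 1" using i1K i01(1) by (cases K) auto
  moreover have "c (i0 + K * \<delta>) \<noteq> 0" using c_nonzero[of i1, OF refl] unfolding i1K .
  ultimately show ?thesis using T_le' T_sum unfolding T_def by (rule that[OF \<open>\<delta> > 0\<close> _ e])
qed

text \<open>
  Dividing the dominant terms by y^i0 and by matching powers of p leaves a monic relation
  for the unit y^\<delta> / p^e.
\<close>
lemma algebraic_unit_monic_relation:
  assumes y0: "y \<noteq> 0" and alg: "algebraic_over_Q y"
  obtains \<delta> e K n where "\<delta> > 0" "K \<ge> 1" "av (y ^ \<delta> / ppow e) = 1"
    "(y ^ \<delta> / ppow e) ^ K \<approx> - (\<Sum>j<K. of_int (n j) * (y ^ \<delta> / ppow e) ^ j)"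
proof -
  obtain c D where sum: "(\<Sum>i\<le>D. of_int (c i) * y ^ i) = 0" and cD: "c D \<noteq> 0"
    using algebraic_vanishing_sum[OF alg y0] by blast
  obtain \<delta> K e i0 where "\<delta> > 0" "K \<ge> 1" and e: "av (y ^ \<delta>) = av (ppow e)"
    and cK: "c (i0 + K * \<delta>) \<noteq> 0"
    and T_le: "\<And>j. j \<le> K \<Longrightarrow> av (of_int (c (i0 + j * \<delta>)) * y ^ (i0 + j * \<delta>))
      \<le> av (of_int (c (i0 + K * \<delta>)) * y ^ (i0 + K * \<delta>))"
    and T_sum: "av (\<Sum>j\<le>K. of_int (c (i0 + j * \<delta>)) * y ^ (i0 + j * \<delta>))
      < av (of_int (c (i0 + K * \<delta>)) * y ^ (i0 + K * \<delta>))"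
    by (rule dominant_terms_progression[OF y0 sum cD]) blast
  define s where "s = y ^ \<delta> / ppow e"
  have avs: "av s = 1" unfolding s_def using e ppow_nonzero[of e] by (simp add: av_divide)
  define a where "a j = of_int (c (i0 + j * \<delta>)) * ppow (e * int j)" for j
  have T_eq: "of_int (c (i0 + j * \<delta>)) * y ^ (i0 + j * \<delta>) = y ^ i0 * (a j * s ^ j)" for j
  proof -
    have "s ^ j = y ^ (j * \<delta>) / ppow (e * int j)" unfolding s_def
      by (simp add: power_divide power_ppow power_mult mult.commute)
    then show ?thesis unfolding a_def using ppow_nonzero[of "e * int j"]
      by (simp add: power_add field_simps)
  qed
  have av_T: "av (of_int (c (i0 + j * \<delta>)) * y ^ (i0 + j * \<delta>)) = av y ^ i0 * av (a j)" for j
    unfolding T_eq using avs by (simp add: av_mult av_power)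
  have y_i0: "av y ^ i0 > 0" using av_pos[OF y0] by simp
  have "av (y ^ i0) * av (\<Sum>j\<le>K. a j * s ^ j) < av (y ^ i0) * av (a K)"
    using T_sum avs unfolding T_eq sum_distrib_left[symmetric] by (simp add: av_mult av_power)
  then have "av (\<Sum>j\<le>K. a j * s ^ j) < av (a K)" using y_i0 by (simp add: av_power)
  moreover have "av (a j) \<le> av (a K)" if "j \<le> K" for j
    using T_le[OF that] y_i0 unfolding av_T by simp
  moreover have "\<exists>u v m. v \<noteq> 0 \<and> a j / a K = of_int u * ppow m / of_int v" for j
    using cK ppow_nonzero unfolding a_def
    by (intro exI[of _ "c (i0 + j * \<delta>)"] exI[of _ "c (i0 + K * \<delta>)"] exI[of _ "e * int j - e * int K"])
      (simp add: ppow_diff field_simps)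
  moreover have "a K \<noteq> 0" unfolding a_def using cK ppow_nonzero by simp
  ultimately obtain n where "s ^ K \<approx> - (\<Sum>j<K. of_int (n j) * s ^ j)"
    using monic_relation_of_dominant_coefficients[OF avs] by blast
  then show ?thesis using \<open>\<delta> > 0\<close> \<open>K \<ge> 1\<close> avs unfolding s_def by (intro that)
qed

lemma algebraic_power_principal_unit:
  assumes y0: "y \<noteq> 0" and alg: "algebraic_over_Q y"
  shows "\<exists>N m. N \<ge> 1 \<and> principal_unit (y ^ N / ppow m)"
proof -
  obtain \<delta> e K n where "\<delta> > 0" "K \<ge> 1" and s: "av (y ^ \<delta> / ppow e) = 1"
    "(y ^ \<delta> / ppow e) ^ K \<approx> - (\<Sum>j<K. of_int (n j) * (y ^ \<delta> / ppow e) ^ j)"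
    by (rule algebraic_unit_monic_relation[OF y0 alg])
  obtain M where M: "M \<ge> 1" "principal_unit ((y ^ \<delta> / ppow e) ^ M)"
    using unit_power_principal_unit[OF s(1) \<open>K \<ge> 1\<close> s(2)] by blast
  have "(y ^ \<delta> / ppow e) ^ M = y ^ (\<delta> * M) / ppow (e * int M)"
    by (simp add: power_divide power_mult power_ppow)
  moreover have "\<delta> * M \<ge> 1" using \<open>\<delta> > 0\<close> M(1) mult_le_mono[of 1 \<delta> 1 M] by simp
  ultimately show ?thesis using M(2) by metis
qed

section \<open>Iwasawa's logarithm\<close>

lemma power_principal_unit: assumes x0: "x \<noteq> 0" shows "\<exists>N m. N \<ge> 1 \<and> principal_unit (x ^ N / ppow m)"
proof -
  have "av x > 0" using x0 av_pos by simp
  then obtain y where y: "algebraic_over_Q y" "av (x - y) < av x" using algebraic_dense by blast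
  have y0: "y \<noteq> 0" using y(2) by auto
  have avy: "av y = av x"
  proof -
    have "av (- (x - y)) < av x" unfolding av_uminus using y(2) .
    then have "av (x + - (x - y)) = av x" by (rule av_add_eq_left)
    then show ?thesis by simp
  qed
  have Uxy: "principal_unit (x / y)"
  proof -
    have "x / y - 1 = (x - y) / y" using y0 by (simp add: field_simps)
    then show ?thesis unfolding principal_unit_def using y(2) avy av_pos[OF y0] by (simp add: av_divide)
  qed
  obtain N m where Nm: "N \<ge> 1" "principal_unit (y ^ N / ppow m)" using algebraic_power_principal_unit[OF y0 y(1)] by blast
  have ex: "x ^ N / ppow m = (y ^ N / ppow m) * (x / y) ^ N" using y0 by (simp add: power_divide)
  have h: "principal_unit ((y ^ N / ppow m) * (x / y) ^ N)" by (rule principal_unit_mult[OF Nm(2) principal_unit_power[OF Uxy]])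
  have "principal_unit (x ^ N / ppow m)" using h unfolding ex .
  then show ?thesis using Nm(1) by blast
qed

lemma log_principal_power_quotient_eq:
  assumes N: "N \<ge> 1" "N' \<ge> 1" and u: "principal_unit (x ^ N / ppow m)" and u': "principal_unit (x ^ N' / ppow m')"
  shows "log_principal (x ^ N / ppow m) / of_nat N = log_principal (x ^ N' / ppow m') / of_nat N'"
proof -
  have x0: "x \<noteq> 0" using principal_unit_nonzero[OF u] N by auto
  define a where "a = x ^ N / ppow m"
  define b where "b = x ^ N' / ppow m'"
  have A: "a ^ N' = x ^ (N * N') / ppow (m * int N')" unfolding a_def by (simp add: power_divide power_mult power_ppow)
  have B: "b ^ N = x ^ (N * N') / ppow (m' * int N)" unfolding b_def power_divide power_ppow power_mult[symmetric]
    by (simp only: mult.commute[of N' N])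
  define X where "X = x ^ (N * N')"
  have X0: "X \<noteq> 0" unfolding X_def using x0 by simp
  have q: "(X / ppow (m * int N')) / (X / ppow (m' * int N)) = ppow (m' * int N) / ppow (m * int N')"
    using X0 ppow_nonzero[of "m * int N'"] ppow_nonzero[of "m' * int N"] by (simp add: divide_simps)
  have "a ^ N' / b ^ N = ppow (m' * int N - m * int N')"
    unfolding A B ppow_diff X_def[symmetric] by (rule q)
  moreover have "principal_unit (a ^ N' / b ^ N)" using principal_unit_divide[OF principal_unit_power[OF u, of N'] principal_unit_power[OF u', of N]]
    unfolding a_def b_def .
  ultimately have "principal_unit (ppow (m' * int N - m * int N'))" by simp
  then have "m' * int N - m * int N' = 0" by (rule principal_unit_ppowD)
  then have "m * int N' = m' * int N" by simp
  then have "a ^ N' = b ^ N" unfolding A B by simp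
  then have "log_principal (a ^ N') = log_principal (b ^ N)" by simp
  then have "of_nat N' * log_principal a = of_nat N * log_principal b"
    using log_principal_power[OF u, of N'] log_principal_power[OF u', of N] unfolding a_def b_def by simp
  then show ?thesis unfolding a_def[symmetric] b_def[symmetric] using N by (simp add: field_simps)
qed

text \<open>
  Some (N, m) with N \<ge> 1 makes x^N / p^m a principal unit (power_principal_unit), and the
  quotient below does not depend on the choice (log_principal_power_quotient_eq).
\<close>
definition iwasawa_log :: "'a \<Rightarrow> 'a" where
  "iwasawa_log x = (if x = 0 then 0 else
     (let r = (SOME r. fst r \<ge> 1 \<and> principal_unit (x ^ fst r / ppow (snd r)))
      in log_principal (x ^ fst r / ppow (snd r)) / of_nat (fst r)))"

lemma iwasawa_log_eq:
  assumes "N \<ge> 1" "principal_unit (x ^ N / ppow m)"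
  shows "iwasawa_log x = log_principal (x ^ N / ppow m) / of_nat N"
proof -
  have x0: "x \<noteq> 0" using principal_unit_nonzero[OF assms(2)] assms(1) by auto
  define r where "r = (SOME r. fst r \<ge> 1 \<and> principal_unit (x ^ fst r / ppow (snd r)))"
  have "\<exists>r. fst r \<ge> 1 \<and> principal_unit (x ^ fst r / ppow (snd r))" using assms by (intro exI[of _ "(N, m)"]) simp
  then have r: "fst r \<ge> 1 \<and> principal_unit (x ^ fst r / ppow (snd r))" unfolding r_def by (rule someI_ex)
  have "iwasawa_log x = log_principal (x ^ fst r / ppow (snd r)) / of_nat (fst r)" unfolding iwasawa_log_def r_def using x0 by (simp add: Let_def)
  also have "\<dots> = log_principal (x ^ N / ppow m) / of_nat N" using log_principal_power_quotient_eq r assms by blast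
  finally show ?thesis .
qed

lemma iwasawa_log_mult:
  assumes x0: "x \<noteq> 0" and y0: "y \<noteq> 0"
  shows "iwasawa_log (x * y) = iwasawa_log x + iwasawa_log y"
proof -
  obtain N m where a: "N \<ge> 1" "principal_unit (x ^ N / ppow m)" using power_principal_unit[OF x0] by blast
  obtain N' m' where b: "N' \<ge> 1" "principal_unit (y ^ N' / ppow m')" using power_principal_unit[OF y0] by blast
  have e: "(x * y) ^ (N * N') / ppow (m * int N' + m' * int N) = (x ^ N / ppow m) ^ N' * (y ^ N' / ppow m') ^ N"
  proof -
    have e1: "(x ^ N / ppow m) ^ N' = x ^ (N * N') / ppow (m * int N')" by (simp add: power_divide power_mult power_ppow)
    have e2: "(y ^ N' / ppow m') ^ N = y ^ (N * N') / ppow (m' * int N)"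
      by (simp add: power_divide power_ppow mult.commute[of N N'] power_mult)
    have e3: "ppow (m * int N' + m' * int N) = ppow (m * int N') * ppow (m' * int N)" by (rule ppow_add)
    show ?thesis unfolding e1 e2 e3 power_mult_distrib by (rule times_divide_times_eq[symmetric])
  qed
  have U: "principal_unit ((x * y) ^ (N * N') / ppow (m * int N' + m' * int N))"
    unfolding e using a b by (intro principal_unit_mult principal_unit_power)
  have NN: "N * N' \<ge> 1" using a b by simp
  have "iwasawa_log (x * y) = log_principal ((x * y) ^ (N * N') / ppow (m * int N' + m' * int N)) / of_nat (N * N')"
    by (rule iwasawa_log_eq[OF NN U])
  also have "\<dots> = (of_nat N' * log_principal (x ^ N / ppow m) + of_nat N * log_principal (y ^ N' / ppow m')) / of_nat (N * N')"
    unfolding e using a b by (simp add: log_principal_mult log_principal_power principal_unit_power)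
  also have "\<dots> = log_principal (x ^ N / ppow m) / of_nat N + log_principal (y ^ N' / ppow m') / of_nat N'"
    using a b by (simp add: field_simps)
  also have "\<dots> = iwasawa_log x + iwasawa_log y" using iwasawa_log_eq a b by simp
  finally show ?thesis .
qed

lemma iwasawa_log_1_plus: "av z < 1 \<Longrightarrow> iwasawa_log (1 + z) = log1p z"
  using iwasawa_log_eq[of 1 "1 + z" 0] principal_unit_1_plus[of z] unfolding log_principal_def by simp

lemma iwasawa_log_p: "iwasawa_log (of_nat p) = 0"
  using iwasawa_log_eq[of 1 "of_nat p" 1] ppow_1 of_nat_p_nonzero by simp

lemma is_iwasawa_log_iwasawa_log: "is_iwasawa_log p av iwasawa_log"
  unfolding is_iwasawa_log_def
proof (intro conjI allI impI)
  show "iwasawa_log 0 = 0" unfolding iwasawa_log_def by simp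
  show "iwasawa_log (x * y) = iwasawa_log x + iwasawa_log y" if "x \<noteq> 0" "y \<noteq> 0" for x y using iwasawa_log_mult that by blast
  show "iwasawa_log (of_nat p) = 0" by (rule iwasawa_log_p)
  show "av_conv av (\<lambda>n. \<Sum>k = 1..n. (- 1) ^ (k + 1) * z ^ k / of_nat k) (iwasawa_log (1 + z))" if "av z < 1" for z
    using av_conv_log1p[OF that] iwasawa_log_1_plus[OF that] unfolding log_series_def by simp
qed

lemma is_iwasawa_log_power:
  assumes g: "is_iwasawa_log p av g" and "x \<noteq> 0"
  shows "g (x ^ n) = of_nat n * g x"
proof -
  have gm: "\<And>x y. x \<noteq> 0 \<Longrightarrow> y \<noteq> 0 \<Longrightarrow> g (x * y) = g x + g y" using g unfolding is_iwasawa_log_def by blast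
  then have "g 1 = 0" using gm[of 1 1] by simp
  then show ?thesis using \<open>x \<noteq> 0\<close> by (induction n) (simp_all add: gm algebra_simps)
qed

lemma is_iwasawa_log_ppow:
  assumes g: "is_iwasawa_log p av g"
  shows "g (ppow m) = 0"
proof -
  have gm: "\<And>x y. x \<noteq> 0 \<Longrightarrow> y \<noteq> 0 \<Longrightarrow> g (x * y) = g x + g y" and gp: "g (of_nat p) = 0"
    using g unfolding is_iwasawa_log_def by blast+
  have gpk: "g (ppow (int k)) = 0" for k
    using is_iwasawa_log_power[OF g of_nat_p_nonzero] gp by (simp add: ppow_of_nat)
  show ?thesis
  proof (cases "m \<ge> 0")
    case True
    then show ?thesis using gpk by (metis nonneg_eq_int)
  next
    case False
    then obtain k where k: "m = - int k" by (metis nonpos_int_cases linorder_not_le less_imp_le)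
    have "g (ppow (- int k) * ppow (int k)) = g (ppow (- int k)) + g (ppow (int k))"
      using ppow_nonzero by (intro gm)
    then show ?thesis using k gpk is_iwasawa_log_power[OF g of_nat_p_nonzero, of 0] by (simp flip: ppow_add)
  qed
qed

lemma is_iwasawa_log_principal_unit:
  assumes g: "is_iwasawa_log p av g" and u: "principal_unit u"
  shows "g u = log_principal u"
proof -
  have "av (u - 1) < 1" using u unfolding principal_unit_def .
  then have "av_conv av (log_series (u - 1)) (g (1 + (u - 1)))"
    using g unfolding is_iwasawa_log_def log_series_def by blast
  moreover have "av_conv av (log_series (u - 1)) (log1p (u - 1))" by (rule av_conv_log1p) fact
  ultimately show ?thesis unfolding log_principal_def using av_conv_unique by fastforce
qed

lemma is_iwasawa_log_unique:
  assumes g: "is_iwasawa_log p av g"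
  shows "g = iwasawa_log"
proof
  fix x
  show "g x = iwasawa_log x"
  proof (cases "x = 0")
    case True then show ?thesis using g unfolding is_iwasawa_log_def iwasawa_log_def by simp
  next
    case False
    obtain N m where N: "N \<ge> 1" and u: "principal_unit (x ^ N / ppow m)"
      using power_principal_unit[OF False] by blast
    have "x ^ N = (x ^ N / ppow m) * ppow m" using ppow_nonzero[of m] by simp
    then have "g (x ^ N) = g (x ^ N / ppow m) + g (ppow m)"
      using g principal_unit_nonzero[OF u] ppow_nonzero unfolding is_iwasawa_log_def by metis
    then have "of_nat N * g x = log_principal (x ^ N / ppow m)"
      using is_iwasawa_log_power[OF g False] is_iwasawa_log_ppow[OF g] is_iwasawa_log_principal_unit[OF g u]
      by simp
    moreover have "of_nat N * iwasawa_log x = log_principal (x ^ N / ppow m)"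
      using iwasawa_log_eq[OF N u] N by simp
    ultimately have "of_nat N * g x = of_nat N * iwasawa_log x" by simp
    then show ?thesis using N by simp
  qed
qed

lemma log_p_eq_iwasawa_log: "log_p p av = iwasawa_log"
  unfolding log_p_def
proof (rule the_equality)
  show "is_iwasawa_log p av iwasawa_log" by (rule is_iwasawa_log_iwasawa_log)
  show "g = iwasawa_log" if "is_iwasawa_log p av g" for g using that by (rule is_iwasawa_log_unique)
qed

section \<open>The function G_(p,E)\<close>

lemma iwasawa_log_1: "iwasawa_log 1 = 0"
  using iwasawa_log_1_plus[of 0] by simp

lemma iwasawa_log_uminus: "iwasawa_log (- y) = iwasawa_log y"
proof (cases "y = 0")
  case False
  have "iwasawa_log ((-1) * (-1)) = iwasawa_log (-1) + iwasawa_log (-1)" by (rule iwasawa_log_mult) auto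
  then have "iwasawa_log (-1) = 0" using iwasawa_log_1 by simp
  then show ?thesis using iwasawa_log_mult[of "-1" y] False by simp
qed simp

definition log_antideriv :: "'a \<Rightarrow> 'a" where "log_antideriv y = y * iwasawa_log y - y"

definition G_partial :: "'a \<Rightarrow> nat \<Rightarrow> 'a" where
  "G_partial x N = (\<Sum>a<p ^ N. log_antideriv (x + of_nat a) * (-1) ^ a)"

lemma log_antideriv_uminus: "log_antideriv (- y) = - log_antideriv y"
  unfolding log_antideriv_def iwasawa_log_uminus by simp

lemma G_pE_eq_av_lim: "G_pE p av x = av_lim av (G_partial x)"
  unfolding G_pE_def G_partial_def log_antideriv_def log_p_eq_iwasawa_log ..

lemma av_iwasawa_log_translate_bounded:
  assumes x: "av x > 1"
  obtains B where "\<And>a::nat. av (iwasawa_log (x + of_nat a)) \<le> B"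
proof -
  have r: "1 / av x < 1" using x by simp
  obtain B where B: "\<forall>z. av z \<le> 1 / av x \<longrightarrow> av (log1p z) \<le> B" using av_log1p_bounded[OF r] by blast
  have x0: "x \<noteq> 0" using x by auto
  have "av (iwasawa_log (x + of_nat a)) \<le> max (av (iwasawa_log x)) B" for a :: nat
  proof -
    have az: "av (of_nat a / x) \<le> 1 / av x" using av_of_nat_le_1[of a] x
      by (simp add: av_divide divide_right_mono)
    then have az1: "av (of_nat a / x) < 1" using r by simp
    have "x + of_nat a = x * (1 + of_nat a / x)" using x0 by (simp add: field_simps)
    then have "iwasawa_log (x + of_nat a) = iwasawa_log x + log1p (of_nat a / x)"
      using iwasawa_log_mult[OF x0 principal_unit_nonzero[OF principal_unit_1_plus[OF az1]]]
        iwasawa_log_1_plus[OF az1] by simp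
    then show ?thesis using B az av_add_le_max[of "iwasawa_log x" "log1p (of_nat a / x)"] by fastforce
  qed
  then show ?thesis by (rule that)
qed

lemma log_antideriv_add_eq:
  assumes "y \<noteq> 0" "av (h / y) < 1"
  shows "log_antideriv (y + h) - log_antideriv y
    = y * log1p (h / y) + h * (iwasawa_log y + log1p (h / y) - 1)"
proof -
  have "y + h = y * (1 + h / y)" using assms(1) by (simp add: field_simps)
  then have "iwasawa_log (y + h) = iwasawa_log y + log1p (h / y)"
    using iwasawa_log_mult[OF assms(1) principal_unit_nonzero[OF principal_unit_1_plus[OF assms(2)]]]
      iwasawa_log_1_plus[OF assms(2)] by simp
  then show ?thesis unfolding log_antideriv_def by (simp add: algebra_simps)
qed

lemma log_antideriv_lipschitz:
  assumes x: "av x > 1"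
  obtains M where "M \<ge> 0"
    "\<And>a h. av h \<le> 1 / real p \<Longrightarrow>
      av (log_antideriv (x + of_nat a + h) - log_antideriv (x + of_nat a)) \<le> M * av h"
proof -
  obtain B where B: "\<And>a::nat. av (iwasawa_log (x + of_nat a)) \<le> B"
    using av_iwasawa_log_translate_bounded[OF x] by blast
  define M where "M = max 1 B"
  have "av (log_antideriv (x + of_nat a + h) - log_antideriv (x + of_nat a)) \<le> M * av h"
    if h: "av h \<le> 1 / real p" for a h
  proof -
    define y where "y = x + of_nat a"
    have ay: "av y = av x" unfolding y_def using av_of_nat_le_1[of a] x by (intro av_add_eq_left) simp
    then have y0: "y \<noteq> 0" using x by auto
    have hy: "av (h / y) \<le> av h"
      using ay x av_nonneg[of h] by (simp add: av_divide divide_le_eq mult_le_cancel_left1)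
    then have hy1: "av (h / y) \<le> 1 / real p" using h by simp
    then have hy2: "av (h / y) < 1" using p_gt_1 by (smt (verit) divide_less_eq_1_pos of_nat_1 of_nat_less_iff)
    define E where "E = log1p (h / y)"
    have avE: "av E \<le> av (h / y)" unfolding E_def by (rule av_log1p_le[OF hy1])
    have E1: "av E \<le> 1" using avE hy2 by simp
    have "av (y * E) \<le> av h" using avE av_pos[OF y0] by (simp add: av_mult av_divide field_simps)
    also have "\<dots> \<le> M * av h" unfolding M_def using av_nonneg[of h] by (simp add: mult_le_cancel_right1)
    finally have t1: "av (y * E) \<le> M * av h" .
    have "av (iwasawa_log y + E) \<le> M" using B[of a] E1 unfolding M_def y_def by (intro av_add_le) auto
    then have "av (iwasawa_log y + E - 1) \<le> M"
      using av_diff_le_max[of "iwasawa_log y + E" 1] unfolding M_def by auto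
    then have "av (iwasawa_log y + E - 1) * av h \<le> M * av h" by (rule mult_right_mono[OF _ av_nonneg])
    then have t2: "av (h * (iwasawa_log y + E - 1)) \<le> M * av h" by (simp add: av_mult mult.commute)
    show ?thesis unfolding y_def[symmetric] log_antideriv_add_eq[OF y0 hy2] E_def[symmetric]
      using t1 t2 by (rule av_add_le)
  qed
  moreover have "M \<ge> 0" unfolding M_def by simp
  ultimately show ?thesis using that by blast
qed

lemma av_G_partial_shift_le:
  assumes x: "av x > 1"
  obtains M where "M \<ge> 0"
    "\<And>N h. N \<ge> 1 \<Longrightarrow> av h \<le> 1 / real p ^ N \<Longrightarrow>
      av (G_partial (x + h) N - G_partial x N) \<le> M / real p ^ N"
proof -
  obtain M where M: "M \<ge> 0"
    "\<And>a h. av h \<le> 1 / real p \<Longrightarrow>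
      av (log_antideriv (x + of_nat a + h) - log_antideriv (x + of_nat a)) \<le> M * av h"
    using log_antideriv_lipschitz[OF x] by blast
  have "av (G_partial (x + h) N - G_partial x N) \<le> M / real p ^ N"
    if h: "N \<ge> 1" "av h \<le> 1 / real p ^ N" for N h
  proof -
    have h1: "av h \<le> 1 / real p" using h p_power_inverse_le[of N] by simp
    have "G_partial (x + h) N - G_partial x N
        = (\<Sum>a<p ^ N. (log_antideriv (x + of_nat a + h) - log_antideriv (x + of_nat a)) * (-1) ^ a)"
      unfolding G_partial_def by (simp add: sum_subtractf[symmetric] algebra_simps)
    also have "av \<dots> \<le> M / real p ^ N"
    proof (rule av_sum_le)
      fix a
      have "av ((log_antideriv (x + of_nat a + h) - log_antideriv (x + of_nat a)) * (-1) ^ a)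
          = av (log_antideriv (x + of_nat a + h) - log_antideriv (x + of_nat a))"
        by (simp add: av_mult av_power)
      also have "\<dots> \<le> M * av h" using M(2)[OF h1] .
      also have "\<dots> \<le> M * (1 / real p ^ N)" using M(1) h(2) by (intro mult_left_mono) auto
      finally show "av ((log_antideriv (x + of_nat a + h) - log_antideriv (x + of_nat a)) * (-1) ^ a)
          \<le> M / real p ^ N" by simp
    qed (use M p_gt_1 in auto)
    finally show ?thesis .
  qed
  then show ?thesis using that M(1) by blast
qed

lemma av_conv_G_partial_shift_zero:
  assumes x: "av x > 1" and h: "\<And>N. av (h N) \<le> 1 / real p ^ N"
  shows "av_conv av (\<lambda>N. G_partial (x + h N) N - G_partial x N) 0"
proof -
  obtain M where M: "M \<ge> 0"
    "\<And>N h. N \<ge> 1 \<Longrightarrow> av h \<le> 1 / real p ^ N \<Longrightarrow>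
      av (G_partial (x + h) N - G_partial x N) \<le> M / real p ^ N"
    using av_G_partial_shift_le[OF x] by blast
  show ?thesis
  proof (rule av_conv_zero_comparison[where N=1])
    show "(\<lambda>N. M / real p ^ N) \<longlonglongrightarrow> 0" using p_gt_1 by (intro LIMSEQ_divide_realpow_zero) simp
    show "\<forall>N\<ge>1. av (G_partial (x + h N) N - G_partial x N) \<le> M / real p ^ N"
      using M(2) h by blast
  qed
qed

lemma av_conv_log_antideriv_shift:
  assumes x: "av x > 1"
  shows "av_conv av (\<lambda>N. log_antideriv (x + of_nat (p ^ N))) (log_antideriv x)"
proof -
  obtain M where M: "M \<ge> 0"
    "\<And>a h. av h \<le> 1 / real p \<Longrightarrow>
      av (log_antideriv (x + of_nat a + h) - log_antideriv (x + of_nat a)) \<le> M * av h"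
    using log_antideriv_lipschitz[OF x] by blast
  have "av_conv av (\<lambda>N. log_antideriv (x + of_nat (p ^ N)) - log_antideriv x) 0"
  proof (rule av_conv_zero_comparison[where N=1])
    show "(\<lambda>N. M / real p ^ N) \<longlonglongrightarrow> 0" using p_gt_1 by (intro LIMSEQ_divide_realpow_zero) simp
    show "\<forall>N\<ge>1. av (log_antideriv (x + of_nat (p ^ N)) - log_antideriv x) \<le> M / real p ^ N"
    proof (intro allI impI)
      fix N :: nat assume "N \<ge> 1"
      then have "av (of_nat (p ^ N) :: 'a) \<le> 1 / real p"
        using av_of_nat_p_power[of N] p_power_inverse_le[of N] by simp
      then show "av (log_antideriv (x + of_nat (p ^ N)) - log_antideriv x) \<le> M / real p ^ N"
        using M(2)[of "of_nat (p ^ N)" 0] av_of_nat_p_power[of N] by simp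
    qed
  qed
  then show ?thesis using av_conv_zero_iff by blast
qed

end

locale Cp_odd = Cp p av for p and av :: "'a::field_char_0 \<Rightarrow> real" +
  assumes odd_p: "odd p"
begin

lemma odd_p_power: "odd (p ^ N)"
  using odd_p by simp

lemma G_partial_Suc: "G_partial x (Suc N) = (\<Sum>j<p. (-1) ^ j * G_partial (x + of_nat (j * p ^ N)) N)"
proof -
  have "G_partial x (Suc N) = (\<Sum>a<p * p ^ N. log_antideriv (x + of_nat a) * (-1) ^ a)"
    unfolding G_partial_def by simp
  also have "\<dots> = (\<Sum>j<p. \<Sum>b<p ^ N. log_antideriv (x + of_nat (j * p ^ N + b)) * (-1) ^ (j * p ^ N + b))"
    by (rule sum_lessThan_mult_split)
  also have "\<dots> = (\<Sum>j<p. (-1) ^ j * G_partial (x + of_nat (j * p ^ N)) N)"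
  proof (rule sum.cong[OF refl])
    fix j
    have "(-1) ^ (j * p ^ N) = (((-1) ^ (p ^ N)) ^ j :: 'a)" by (metis power_mult mult.commute)
    then have pm: "(-1) ^ (j * p ^ N) = ((-1) ^ j :: 'a)" using odd_p_power[of N] by simp
    show "(\<Sum>b<p ^ N. log_antideriv (x + of_nat (j * p ^ N + b)) * (-1) ^ (j * p ^ N + b))
        = (-1) ^ j * G_partial (x + of_nat (j * p ^ N)) N"
      unfolding G_partial_def sum_distrib_left using pm by (intro sum.cong) (simp_all add: power_add add.assoc)
  qed
  finally show ?thesis .
qed

text \<open>Since p is odd, the signs (-1)^j over one block of length p sum to 1.\<close>
lemma G_partial_Suc_diff:
  "G_partial x (Suc N) - G_partial x N
    = (\<Sum>j<p. (-1) ^ j * (G_partial (x + of_nat (j * p ^ N)) N - G_partial x N))"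
  unfolding G_partial_Suc using sum_minus_one_power_odd[OF odd_p, where 'a='a]
  by (simp add: right_diff_distrib sum_subtractf sum_distrib_right[symmetric])

lemma G_partial_conv:
  assumes x: "av x > 1"
  shows "av_conv av (G_partial x) (G_pE p av x)"
proof -
  obtain M where M: "M \<ge> 0"
    "\<And>N h. N \<ge> 1 \<Longrightarrow> av h \<le> 1 / real p ^ N \<Longrightarrow>
      av (G_partial (x + h) N - G_partial x N) \<le> M / real p ^ N"
    using av_G_partial_shift_le[OF x] by blast
  have step: "av (G_partial x (Suc n) - G_partial x n) \<le> M / real p ^ n" if n: "n \<ge> 1" for n
    unfolding G_partial_Suc_diff
  proof (rule av_sum_le)
    fix j
    have "av (of_nat (j * p ^ n) :: 'a) = av (of_nat j :: 'a) * (1 / real p ^ n)"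
      using av_of_nat_p_power[of n] by (simp add: av_mult)
    also have "\<dots> \<le> 1 / real p ^ n" using av_of_nat_le_1[of j] p_gt_1 by (simp add: divide_right_mono)
    finally have "av (G_partial (x + of_nat (j * p ^ n)) n - G_partial x n) \<le> M / real p ^ n"
      using M(2)[OF n] by blast
    then show "av ((-1) ^ j * (G_partial (x + of_nat (j * p ^ n)) n - G_partial x n)) \<le> M / real p ^ n"
      by (simp add: av_mult av_power)
  qed (use M p_gt_1 in auto)
  have "\<exists>L. av_conv av (G_partial x) L"
  proof (rule av_conv_if_succ_diff_zero, intro allI impI)
    fix e :: real assume e: "e > 0"
    have "(\<lambda>n. M / real p ^ n) \<longlonglongrightarrow> 0" using p_gt_1 by (intro LIMSEQ_divide_realpow_zero) simp
    then obtain N0 where N0: "\<forall>n\<ge>N0. norm (M / real p ^ n - 0) < e" using e LIMSEQ_iff by metis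
    show "\<exists>N. \<forall>n\<ge>N. av (G_partial x (Suc n) - G_partial x n) < e"
      using step N0 M(1) by (intro exI[of _ "max 1 N0"]) (fastforce intro: le_less_trans)
  qed
  then show ?thesis unfolding G_pE_eq_av_lim using av_lim_eqI by blast
qed

lemma G_partial_1_plus:
  "G_partial (1 + x) N + G_partial x N = log_antideriv x + log_antideriv (x + of_nat (p ^ N))"
proof -
  define g where "g a = log_antideriv (x + of_nat a) * (-1) ^ a" for a
  have "G_partial (1 + x) N = - (\<Sum>a<p ^ N. g (Suc a))" unfolding G_partial_def g_def
    by (simp add: sum_negf[symmetric] algebra_simps)
  moreover have "(\<Sum>a<Suc (p ^ N). g a) = g 0 + (\<Sum>a<p ^ N. g (Suc a))" by (rule sum.lessThan_Suc_shift)
  ultimately have "G_partial (1 + x) N + G_partial x N = g 0 - g (p ^ N)"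
    unfolding G_partial_def g_def[symmetric] by (simp add: algebra_simps)
  then show ?thesis unfolding g_def using odd_p_power[of N] by simp
qed

lemma G_partial_1_minus: "G_partial (1 - x) N = - G_partial (x - of_nat (p ^ N)) N"
proof -
  define q where "q = p ^ N"
  have "G_partial (1 - x) N = (\<Sum>a\<in>{0..<q}. log_antideriv (1 - x + of_nat a) * (-1) ^ a)"
    unfolding G_partial_def q_def by (simp add: atLeast0LessThan)
  also have "\<dots> = (\<Sum>i\<in>{0..<q}. log_antideriv (1 - x + of_nat (q - Suc i)) * (-1) ^ (q - Suc i))"
    by (subst sum.atLeastLessThan_rev) simp
  also have "\<dots> = (\<Sum>i\<in>{0..<q}. - (log_antideriv (x - of_nat q + of_nat i) * (-1) ^ i))"
  proof (rule sum.cong[OF refl])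
    fix i assume "i \<in> {0..<q}"
    then have i: "i < q" by simp
    have e1: "1 - x + of_nat (q - Suc i) = - (x - of_nat q + of_nat i :: 'a)"
      using i by (simp add: of_nat_diff)
    have "even (q - Suc i) \<longleftrightarrow> even i" using i odd_p_power[of N] unfolding q_def by presburger
    then have e2: "(-1) ^ (q - Suc i) = ((-1) ^ i :: 'a)" by (simp add: minus_one_power_iff)
    show "log_antideriv (1 - x + of_nat (q - Suc i)) * (-1) ^ (q - Suc i)
        = - (log_antideriv (x - of_nat q + of_nat i) * (-1) ^ i)"
      unfolding e1 e2 log_antideriv_uminus by simp
  qed
  also have "\<dots> = - G_partial (x - of_nat (p ^ N)) N" unfolding G_partial_def q_def
    by (simp add: sum_negf atLeast0LessThan)
  finally show ?thesis .
qed

lemma G_pE_1_plus: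
  assumes x: "av x > 1"
  shows "G_pE p av (1 + x) + G_pE p av x = 2 * x * (iwasawa_log x - 1)"
proof -
  have "av (1 + x) > 1" using av_1_plus[OF x] x by simp
  then have "av_conv av (\<lambda>N. G_partial (1 + x) N + G_partial x N) (G_pE p av (1 + x) + G_pE p av x)"
    by (rule av_conv_add[OF G_partial_conv G_partial_conv[OF x]])
  moreover have "av_conv av (\<lambda>N. G_partial (1 + x) N + G_partial x N) (log_antideriv x + log_antideriv x)"
    unfolding G_partial_1_plus by (rule av_conv_add[OF av_conv_const av_conv_log_antideriv_shift[OF x]])
  ultimately have "G_pE p av (1 + x) + G_pE p av x = log_antideriv x + log_antideriv x"
    by (rule av_conv_unique)
  then show ?thesis unfolding log_antideriv_def by (simp add: algebra_simps)
qed

lemma G_pE_1_minus: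
  assumes x: "av x > 1"
  shows "G_pE p av (1 - x) + G_pE p av x = 0"
proof -
  have "av (1 - x) > 1" using av_1_plus[of "- x"] x by simp
  then have "av_conv av (\<lambda>N. G_partial (1 - x) N + G_partial x N) (G_pE p av (1 - x) + G_pE p av x)"
    by (rule av_conv_add[OF G_partial_conv G_partial_conv[OF x]])
  moreover have "av_conv av (\<lambda>N. G_partial (1 - x) N + G_partial x N) 0"
  proof -
    have "av (- of_nat (p ^ N) :: 'a) \<le> 1 / real p ^ N" for N using av_of_nat_p_power[of N] by simp
    then have "av_conv av (\<lambda>N. G_partial (x + - of_nat (p ^ N)) N - G_partial x N) 0"
      by (rule av_conv_G_partial_shift_zero[OF x])
    then have "av_conv av (\<lambda>N. -1 * (G_partial (x + - of_nat (p ^ N)) N - G_partial x N)) 0"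
      by (rule av_conv_mult_zero[OF av_conv_const])
    then show ?thesis unfolding G_partial_1_minus by simp
  qed
  ultimately show ?thesis by (rule av_conv_unique)
qed

lemma G_pE_minus:
  assumes x: "av x > 1"
  shows "G_pE p av x - G_pE p av (- x) = 2 * x * (iwasawa_log x - 1)"
proof -
  have "av (1 + x) > 1" using av_1_plus[OF x] x by simp
  then have "G_pE p av (1 - (1 + x)) + G_pE p av (1 + x) = 0" by (rule G_pE_1_minus)
  then have "G_pE p av (- x) = - G_pE p av (1 + x)" by (simp add: eq_neg_iff_add_eq_0)
  then show ?thesis using G_pE_1_plus[OF x] by (simp add: algebra_simps)
qed

end

theorem proposition4p1:
  fixes p :: nat and av :: "'a::field_char_0 \<Rightarrow> real"
  assumes "is_Cp p av" and "odd p"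
  shows "\<forall>x. av x > 1 \<longrightarrow>
           G_pE p av (1 - x) + G_pE p av x = 0 \<and>
           G_pE p av x - G_pE p av (- x) = 2 * x * (log_p p av x - 1) \<and>
           G_pE p av (1 + x) + G_pE p av x = 2 * x * (log_p p av x - 1)"
proof -
  interpret Cp_odd p av
    using assms by (unfold_locales) (auto simp: Cp_def)
  show ?thesis unfolding log_p_eq_iwasawa_log using G_pE_1_minus G_pE_minus G_pE_1_plus by blast
qed

end
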